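(* Let $\Phi(\vec x)=\bigwedge_{i=1}^m f_i\mid g_i$ be a system of divisibility constraints in $d$ variables. Then $\log_2\big(\prod_{p\in\mathbb P(\Phi)}p\big)\le m^2(d+2)\big(\langle\|\Phi\|_\infty\rangle+2\big)$. Furthermore, if $\Phi$ has the elimination property for a total order $\preceq$ on $\vec x$, then $\log_2\big(\prod_{p\in\mathbb P_0(\Phi)}p\big)\le 64\, m^5(d+2)^4\big(\langle\|\Phi\|_\infty\rangle+2\big)$.
   Context: Linear polynomials: $f=a_1x_1+\dots+a_dx_d+c$ with integer coefficients and constant $c$; $\gcd(f)=\gcd(a_1,\dots,a_d,c)$; $f$ is primitive if $f\ne0$ and $\gcd(f)=1$; the primitive part of a non-zero $g$ is the unique primitive $f$ with $g=\gcd(g)f$; $\mathbb Z f=\{bf:b\in\mathbb Z\}$. A system of divisibility constraints is $\Phi=\bigwedge_{i=1}^m f_i\mid g_i$ with $m\ge1$ and linear polynomials $f_i\ne0$, $g_i$; $\mathrm{terms}(\Phi)=\{f_i,g_i\}$. $\mathbb P(\Phi)$ is the set of primes $p$ with $p\le m$ or $p$ dividing some coefficient or constant of some left-hand side $f_i$. Divisibility module: for primitive $f$, $M_f(\Phi)$ is the smallest set of linear polynomials containing $f$, closed under integer linear combinations, and such that whenever $g\mid h$ is a constraint of $\Phi$ and $b\cdot g\in M_f(\Phi)$ for some $b\in\mathbb Z$, then $b\cdot h\in M_f(\Phi)$. Leading variable: for a total order $x_1\preceq\dots\preceq x_d$, $\mathrm{lv}(f)$ is the largest variable with non-zero coefficient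 in $f$, and $\mathrm{lv}(f)=\bot=:x_0$ for constant $f$, $\bot$ being below all variables. Elimination property for $\preceq$: for every primitive part $f$ of a polynomial appearing as a left-hand side in $\Phi$ and every $0\le k\le d$, the set $\{g:\mathrm{lv}(g)\preceq x_k\text{ and } f\mid g\text{ appears in }\Phi\}$ is a linearly independent set forming a basis of $M_f(\Phi)\cap\mathbb Z[x_1,\dots,x_k]$. S-polynomials: for $f,g$ with $\mathrm{lv}(f)=x_l$, $\mathrm{lv}(g)=x_k$, $S(f,g)=b_k f-a_l g$ where $a_l$ is the coefficient of $x_l$ in $f$ and $b_k$ the coefficient of $x_k$ in $g$ (if $f$ is constant, $a_l:=f$; if $g$ is constant, $b_k:=g$). For a set $X$, $S(X)=X\cup\{S(f,g):f,g\in X\}$. For primitive $f$, $\Delta_f(\Phi)$ is the smallest set containing $\mathrm{terms}(\Phi)$ such that whenever $f\mid g$ occurs in $\Phi$ and $h\in\Delta_f(\Phi)$ with $\mathrm{lv}(g)=\mathrm{lv}(h)$, then $S(g,h)\in\Delta_f(\Phi)$. $\Delta(\Phi)$ is the union of $\Delta_f(\Phi)$ over all primitive parts $f$ of polynomials in $\mathrm{terms}(\Phi)$. Difficult primes: $\mathbb P_0(\Phi)$ is the set of primes $p$ such that (P1) $p\le|S(\Delta(\Phi))|$, or (P2) $p$ divides a non-zero coefficient or constant of a polynomial in $S(\Delta(\Phi))$, or (P3) $p$ divides the smallest in absolute value non-zero $\lambda\in\mathbb Z$ such that $\lambda g\in M_f(\Phi)$ for some primitive polynomial $f$ occurring in $\Phi$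 and some $g\in\Delta_f(\Phi)$ (when such $\lambda$ exists). Sizes: $\|\Phi\|_\infty$ is the maximum absolute value of a coefficient or constant of a polynomial in $\mathrm{terms}(\Phi)$; $\langle a\rangle=1+\lceil\log_2(|a|+1)\rceil$. *)

theory Defs
  imports Complex_Main "HOL-Computational_Algebra.Primes"
begin

text \<open>A linear polynomial a_1 x_1 + ... + a_d x_d + c in d variables is represented
  as a function  f :: nat => int  with  f 0 = c  (the constant),  f k = a_k  for 1 <= k <= d,
  and  f k = 0  for k > d.  A system of divisibility constraints  f_1 | g_1 /\ ... /\ f_m | g_m
  is the list of pairs [(f_1,g_1), ..., (f_m,g_m)].\<close>

type_synonym lpoly = "nat \<Rightarrow> int"
type_synonym dsystem = "(lpoly \<times> lpoly) list"

definition in_vars :: "nat \<Rightarrow> lpoly \<Rightarrow> bool" where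
  "in_vars d f \<longleftrightarrow> (\<forall>i>d. f i = 0)"

definition is_system :: "nat \<Rightarrow> dsystem \<Rightarrow> bool" where
  "is_system d \<Phi> \<longleftrightarrow> length \<Phi> \<ge> 1 \<and>
     (\<forall>(f, g) \<in> set \<Phi>. f \<noteq> (\<lambda>_. 0) \<and> in_vars d f \<and> in_vars d g)"

definition terms :: "dsystem \<Rightarrow> lpoly set" where
  "terms \<Phi> = fst ` set \<Phi> \<union> snd ` set \<Phi>"

definition lhs :: "dsystem \<Rightarrow> lpoly set" where
  "lhs \<Phi> = fst ` set \<Phi>"

definition pgcd :: "lpoly \<Rightarrow> int" where
  "pgcd f = Gcd (range f)"

definition primitive :: "lpoly \<Rightarrow> bool" where
  "primitive f \<longleftrightarrow> f \<noteq> (\<lambda>_. 0) \<and> pgcd f = 1"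

definition prim_part :: "lpoly \<Rightarrow> lpoly" where
  "prim_part g = (\<lambda>i. g i div pgcd g)"

definition smult_lp :: "int \<Rightarrow> lpoly \<Rightarrow> lpoly" where
  "smult_lp b g = (\<lambda>i. b * g i)"

inductive_set Mmod :: "dsystem \<Rightarrow> lpoly \<Rightarrow> lpoly set" for \<Phi> f where
  gen: "f \<in> Mmod \<Phi> f"
| add: "g \<in> Mmod \<Phi> f \<Longrightarrow> h \<in> Mmod \<Phi> f \<Longrightarrow> (\<lambda>i. g i + h i) \<in> Mmod \<Phi> f"
| smul: "g \<in> Mmod \<Phi> f \<Longrightarrow> smult_lp b g \<in> Mmod \<Phi> f"
| dvd: "(g, h) \<in> set \<Phi> \<Longrightarrow> smult_lp b g \<in> Mmod \<Phi> f \<Longrightarrow> smult_lp b h \<in> Mmod \<Phi> f"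

text \<open>A total order on the variables x_1..x_d is given by a permutation sigma of {1..d}:
  x_(sigma 1) < x_(sigma 2) < ... < x_(sigma d).  The leading variable is represented by its
  rank in this order, 0 standing for bottom (constant polynomials).\<close>

definition var_order :: "nat \<Rightarrow> (nat \<Rightarrow> nat) \<Rightarrow> bool" where
  "var_order d \<sigma> \<longleftrightarrow> bij_betw \<sigma> {1..d} {1..d}"

definition lv :: "nat \<Rightarrow> (nat \<Rightarrow> nat) \<Rightarrow> lpoly \<Rightarrow> nat" where
  "lv d \<sigma> f = Max ({0} \<union> {k \<in> {1..d}. f (\<sigma> k) \<noteq> 0})"

definition lc :: "nat \<Rightarrow> (nat \<Rightarrow> nat) \<Rightarrow> lpoly \<Rightarrow> int" where
  "lc d \<sigma> f = (if lv d \<sigma> f = 0 then f 0 else f (\<sigma> (lv d \<sigma> f)))"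

definition lower_polys :: "nat \<Rightarrow> (nat \<Rightarrow> nat) \<Rightarrow> nat \<Rightarrow> lpoly set" where
  "lower_polys d \<sigma> k = {h. in_vars d h \<and> lv d \<sigma> h \<le> k}"

definition lin_indep_Z :: "lpoly set \<Rightarrow> bool" where
  "lin_indep_Z G \<longleftrightarrow> finite G \<and>
     (\<forall>c. (\<forall>i. (\<Sum>g\<in>G. c g * g i) = 0) \<longrightarrow> (\<forall>g\<in>G. c g = 0))"

definition span_Z :: "lpoly set \<Rightarrow> lpoly set" where
  "span_Z G = {h. \<exists>c. h = (\<lambda>i. \<Sum>g\<in>G. c g * g i)}"

definition elimination_property :: "nat \<Rightarrow> (nat \<Rightarrow> nat) \<Rightarrow> dsystem \<Rightarrow> bool" where
  "elimination_property d \<sigma> \<Phi> \<longleftrightarrow>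
     (\<forall>f \<in> prim_part ` lhs \<Phi>. \<forall>k \<le> d.
        (let G = {g. lv d \<sigma> g \<le> k \<and> (f, g) \<in> set \<Phi>} in
          lin_indep_Z G \<and> span_Z G = Mmod \<Phi> f \<inter> lower_polys d \<sigma> k))"

definition spoly :: "nat \<Rightarrow> (nat \<Rightarrow> nat) \<Rightarrow> lpoly \<Rightarrow> lpoly \<Rightarrow> lpoly" where
  "spoly d \<sigma> f g = (\<lambda>i. lc d \<sigma> g * f i - lc d \<sigma> f * g i)"

definition SX :: "nat \<Rightarrow> (nat \<Rightarrow> nat) \<Rightarrow> lpoly set \<Rightarrow> lpoly set" where
  "SX d \<sigma> X = X \<union> {spoly d \<sigma> f g | f g. f \<in> X \<and> g \<in> X}"

inductive_set Delta :: "nat \<Rightarrow> (nat \<Rightarrow> nat) \<Rightarrow> dsystem \<Rightarrow> lpoly \<Rightarrow> lpoly set"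
  for d \<sigma> \<Phi> f where
  base: "h \<in> terms \<Phi> \<Longrightarrow> h \<in> Delta d \<sigma> \<Phi> f"
| step: "(f, g) \<in> set \<Phi> \<Longrightarrow> h \<in> Delta d \<sigma> \<Phi> f \<Longrightarrow> lv d \<sigma> g = lv d \<sigma> h
          \<Longrightarrow> spoly d \<sigma> g h \<in> Delta d \<sigma> \<Phi> f"

definition DeltaAll :: "nat \<Rightarrow> (nat \<Rightarrow> nat) \<Rightarrow> dsystem \<Rightarrow> lpoly set" where
  "DeltaAll d \<sigma> \<Phi> = (\<Union>h \<in> {h \<in> terms \<Phi>. h \<noteq> (\<lambda>_. 0)}. Delta d \<sigma> \<Phi> (prim_part h))"

definition primesP :: "dsystem \<Rightarrow> nat set" where
  "primesP \<Phi> = {p. prime p \<and> (p \<le> length \<Phi> \<or>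
      (\<exists>f \<in> lhs \<Phi>. \<exists>i. f i \<noteq> 0 \<and> int p dvd f i))}"

definition min_lambda :: "dsystem \<Rightarrow> lpoly \<Rightarrow> lpoly \<Rightarrow> nat" where
  "min_lambda \<Phi> f g = (LEAST n::nat. n > 0 \<and>
      (smult_lp (int n) g \<in> Mmod \<Phi> f \<or> smult_lp (- int n) g \<in> Mmod \<Phi> f))"

definition primesP0 :: "nat \<Rightarrow> (nat \<Rightarrow> nat) \<Rightarrow> dsystem \<Rightarrow> nat set" where
  "primesP0 d \<sigma> \<Phi> = {p. prime p \<and>
      ((infinite (SX d \<sigma> (DeltaAll d \<sigma> \<Phi>)) \<or> p \<le> card (SX d \<sigma> (DeltaAll d \<sigma> \<Phi>)))
     \<or> (\<exists>h \<in> SX d \<sigma> (DeltaAll d \<sigma> \<Phi>). \<exists>i. h i \<noteq> 0 \<and> int p dvd h i)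
     \<or> (\<exists>f g. f \<in> terms \<Phi> \<and> primitive f \<and> g \<in> Delta d \<sigma> \<Phi> f \<and>
           (\<exists>lam. lam \<noteq> 0 \<and> smult_lp lam g \<in> Mmod \<Phi> f) \<and>
           int p dvd int (min_lambda \<Phi> f g)))}"

definition norm_inf :: "nat \<Rightarrow> dsystem \<Rightarrow> int" where
  "norm_inf d \<Phi> = Max {\<bar>h i\<bar> | h i. h \<in> terms \<Phi> \<and> i \<le> d}"

definition bitsize :: "int \<Rightarrow> int" where
  "bitsize a = 1 + \<lceil>log 2 (real_of_int (\<bar>a\<bar> + 1))\<rceil>"

end

(*
  Every prime of P(Phi) is at most m or divides a non-zero coefficient of a left-hand side,
  so the product of these primes divides a product of at most m(d+2) non-zero integers,
  each of absolute value at most 2^(b+m), where b is the bit size of the largest coefficient.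

  For P_0(Phi) the same counting works once Delta(Phi) is under control.  Under the
  elimination property a polynomial h meets at most one right-hand side of f with the same
  leading variable, so Delta_f consists of the iterates of a single reduction map applied to the
  terms; each reduction lowers the leading variable, hence |Delta_f| <= |terms| (d+2) and each
  reduction enlarges the coefficients by a factor of at most 2N.  The same induction on the
  leading variable bounds the minimal multipliers lambda by N^(d+1).
*)

theory Submission
  imports Defs
begin

section \<open>Leading variables and S-polynomials\<close>

lemma finite_lv_candidates: "finite ({0} \<union> {k \<in> {1..d::nat}. f (\<sigma> k) \<noteq> 0})"
  by (rule finite_subset[where B = "{0..d}"]) auto

lemma lv_le: "lv d \<sigma> f \<le> d"
  unfolding lv_def by (rule Max.boundedI[OF finite_lv_candidates]) auto

lemma lv_le_iff: "lv d \<sigma> f \<le> k \<longleftrightarrow> (\<forall>j\<in>{1..d}. k < j \<longrightarrow> f (\<sigma> j) = 0)"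
  unfolding lv_def by (subst Max_le_iff[OF finite_lv_candidates])
    (auto, metis Suc_leI gr_zeroI le0 le_trans not_le, metis One_nat_def atLeastAtMost_iff not_le)

lemma lv_pos_coeff: "0 < lv d \<sigma> f \<Longrightarrow> f (\<sigma> (lv d \<sigma> f)) \<noteq> 0"
  using Max_in[OF finite_lv_candidates, of d f \<sigma>] unfolding lv_def by auto

lemma lv_cong:
  "(\<And>k. k \<in> {1..d} \<Longrightarrow> f (\<sigma> k) = 0 \<longleftrightarrow> g (\<sigma> k) = 0) \<Longrightarrow> lv d \<sigma> f = lv d \<sigma> g"
  unfolding lv_def by (rule arg_cong[where f = Max]) auto

lemma lv_smult: "b \<noteq> 0 \<Longrightarrow> lv d \<sigma> (smult_lp b g) = lv d \<sigma> g"
  by (rule lv_cong) (simp add: smult_lp_def)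

lemma lv_zero_imp_const:
  assumes "var_order d \<sigma>" "in_vars d h" "lv d \<sigma> h = 0" "0 < i"
  shows "h i = 0"
proof (cases "i \<le> d")
  case True
  with assms(4) have "i \<in> \<sigma> ` {1..d}"
    using assms(1) unfolding var_order_def bij_betw_def by simp
  then obtain k where "k \<in> {1..d}" "\<sigma> k = i" by blast
  moreover have "\<forall>j\<in>{1..d}. 0 < j \<longrightarrow> h (\<sigma> j) = 0"
    using assms(3) lv_le_iff[of d \<sigma> h 0] by simp
  ultimately show ?thesis by fastforce
next
  case False
  then show ?thesis using assms(2) by (simp add: in_vars_def)
qed

lemma lc_nonzero:
  assumes "var_order d \<sigma>" "in_vars d h" "h \<noteq> (\<lambda>_. 0)"
  shows "lc d \<sigma> h \<noteq> 0"
proof (cases "lv d \<sigma> h = 0")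
  case True
  have "h = (\<lambda>_. 0)" if "h 0 = 0"
    using that lv_zero_imp_const[OF assms(1,2) True] by (metis neq0_conv)
  then show ?thesis using True assms(3) by (auto simp: lc_def)
next
  case False
  then show ?thesis using lv_pos_coeff[of d \<sigma> h] by (simp add: lc_def)
qed

lemma abs_lc_le: "(\<And>i. \<bar>h i\<bar> \<le> B) \<Longrightarrow> \<bar>lc d \<sigma> h\<bar> \<le> B"
  unfolding lc_def by simp

lemma in_vars_spoly: "in_vars d g \<Longrightarrow> in_vars d h \<Longrightarrow> in_vars d (spoly d \<sigma> g h)"
  by (simp add: in_vars_def spoly_def)

lemma in_vars_smult: "in_vars d g \<Longrightarrow> in_vars d (smult_lp b g)"
  by (simp add: in_vars_def smult_lp_def)

lemma spoly_zero_right: "spoly d \<sigma> g (\<lambda>_. 0) = (\<lambda>_. 0)"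
  by (simp add: spoly_def lc_def lv_def)

lemma abs_spoly_le:
  fixes A B :: int
  assumes "\<And>i. \<bar>g i\<bar> \<le> A" "\<And>i. \<bar>h i\<bar> \<le> B"
  shows "\<bar>spoly d \<sigma> g h i\<bar> \<le> 2 * A * B"
proof -
  have "0 \<le> A" "0 \<le> B" using assms[of 0] by auto
  have "\<bar>spoly d \<sigma> g h i\<bar> \<le> \<bar>lc d \<sigma> h\<bar> * \<bar>g i\<bar> + \<bar>lc d \<sigma> g\<bar> * \<bar>h i\<bar>"
    unfolding spoly_def by (metis abs_mult abs_triangle_ineq4)
  also have "\<dots> \<le> B * A + A * B"
    using assms abs_lc_le \<open>0 \<le> A\<close> \<open>0 \<le> B\<close> by (intro add_mono mult_mono) auto
  finally show ?thesis by simp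
qed

text \<open>Zero is ranked below the constants, so that an S-polynomial step lowers the rank also
  when it cancels a constant.\<close>

definition lv_rank :: "nat \<Rightarrow> (nat \<Rightarrow> nat) \<Rightarrow> lpoly \<Rightarrow> nat" where
  "lv_rank d \<sigma> h = (if h = (\<lambda>_. 0) then 0 else Suc (lv d \<sigma> h))"

lemma lv_rank_le: "lv_rank d \<sigma> h \<le> Suc d"
  using lv_le[of d \<sigma> h] by (simp add: lv_rank_def)

lemma spoly_same_lv_zero:
  assumes "var_order d \<sigma>" "in_vars d g" "in_vars d h" "lv d \<sigma> g = 0" "lv d \<sigma> h = 0"
  shows "spoly d \<sigma> g h = (\<lambda>_. 0)"
proof
  fix i
  show "spoly d \<sigma> g h i = 0"
    using assms lv_zero_imp_const[OF assms(1,2,4)] lv_zero_imp_const[OF assms(1,3,5)]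
    by (cases "i = 0") (auto simp: spoly_def lc_def)
qed

lemma lv_spoly_less:
  assumes "lv d \<sigma> g = lv d \<sigma> h" "0 < lv d \<sigma> h"
  shows "lv d \<sigma> (spoly d \<sigma> g h) < lv d \<sigma> h"
proof -
  let ?k = "lv d \<sigma> h"
  have "spoly d \<sigma> g h (\<sigma> j) = 0" if "j \<in> {1..d}" "?k - 1 < j" for j
  proof (cases "j = ?k")
    case False
    then have "?k < j" using that by auto
    then show ?thesis
      using that(1) assms(1) lv_le_iff[of d \<sigma> g ?k] lv_le_iff[of d \<sigma> h ?k]
      by (auto simp: spoly_def)
  qed (use assms in \<open>simp add: spoly_def lc_def\<close>)
  then have "lv d \<sigma> (spoly d \<sigma> g h) \<le> ?k - 1" unfolding lv_le_iff by blast
  then show ?thesis using assms(2) by linarith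
qed

lemma lv_rank_spoly_less:
  assumes "var_order d \<sigma>" "in_vars d g" "in_vars d h"
    and "lv d \<sigma> g = lv d \<sigma> h" "h \<noteq> (\<lambda>_. 0)"
  shows "lv_rank d \<sigma> (spoly d \<sigma> g h) < lv_rank d \<sigma> h"
proof (cases "lv d \<sigma> h = 0")
  case True
  then show ?thesis using spoly_same_lv_zero[OF assms(1-3)] assms(4,5) by (simp add: lv_rank_def)
next
  case False
  then show ?thesis using lv_spoly_less[OF assms(4)] assms(5) by (simp add: lv_rank_def)
qed

section \<open>The divisibility module and integer spans\<close>

lemma Mmod_zero: "(\<lambda>_. 0) \<in> Mmod \<Phi> f"
  using Mmod.smul[OF Mmod.gen, where b = 0] by (simp add: smult_lp_def)

lemma Mmod_rhs: "(f, g) \<in> set \<Phi> \<Longrightarrow> g \<in> Mmod \<Phi> f"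
  using Mmod.dvd[where g = f and h = g and b = 1] Mmod.gen[of f \<Phi>] by (simp add: smult_lp_def)

lemma Mmod_lin:
  "g \<in> Mmod \<Phi> f \<Longrightarrow> h \<in> Mmod \<Phi> f \<Longrightarrow> (\<lambda>i. a * g i + b * h i) \<in> Mmod \<Phi> f"
  using Mmod.add[OF Mmod.smul[of g \<Phi> f a] Mmod.smul[of h \<Phi> f b]] by (simp add: smult_lp_def)

lemma Mmod_subset: "f' \<in> Mmod \<Phi> f \<Longrightarrow> Mmod \<Phi> f' \<subseteq> Mmod \<Phi> f"
proof
  fix x assume "f' \<in> Mmod \<Phi> f" "x \<in> Mmod \<Phi> f'"
  from this(2) show "x \<in> Mmod \<Phi> f"
    by (induction rule: Mmod.induct) (auto intro: Mmod.intros \<open>f' \<in> Mmod \<Phi> f\<close>)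
qed

lemma Mmod_uminus: "Mmod \<Phi> (\<lambda>i. - f i) = Mmod \<Phi> f"
proof -
  have "(\<lambda>i. - f i) \<in> Mmod \<Phi> f" "f \<in> Mmod \<Phi> (\<lambda>i. - f i)"
    using Mmod.smul[OF Mmod.gen, where b = "-1" and f = f]
      Mmod.smul[OF Mmod.gen, where b = "-1" and f = "\<lambda>i. - f i"]
    by (simp_all add: smult_lp_def)
  then show ?thesis using Mmod_subset by blast
qed

lemma span_Z_intro: "h = (\<lambda>i. \<Sum>x\<in>G. c x * x i) \<Longrightarrow> h \<in> span_Z G"
  unfolding span_Z_def by blast

lemma span_Z_zero: "(\<lambda>_. 0) \<in> span_Z G"
  by (rule span_Z_intro[where c = "\<lambda>_. 0"]) simp

lemma span_Z_empty: "span_Z {} = {\<lambda>_. 0}"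
  unfolding span_Z_def by simp

lemma span_Z_base:
  assumes "finite G" "g \<in> G"
  shows "g \<in> span_Z G"
proof -
  let ?c = "\<lambda>x. if x = g then 1 else 0"
  have "(\<Sum>x\<in>G. ?c x * x i) = g i" for i
  proof -
    have "(\<Sum>x\<in>G. ?c x * x i) = (\<Sum>x\<in>G. if x = g then g i else 0)"
      by (intro sum.cong) auto
    then show ?thesis using assms by (simp add: sum.delta)
  qed
  then have "g = (\<lambda>i. \<Sum>x\<in>G. ?c x * x i)" by simp
  then show ?thesis by (rule span_Z_intro)
qed

lemma span_Z_lin:
  assumes "g \<in> span_Z G" "h \<in> span_Z G"
  shows "(\<lambda>i. a * g i + b * h i) \<in> span_Z G"
proof -
  obtain c where g: "g = (\<lambda>i. \<Sum>x\<in>G. c x * x i)" using assms(1) unfolding span_Z_def by blast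
  obtain c' where h: "h = (\<lambda>i. \<Sum>x\<in>G. c' x * x i)" using assms(2) unfolding span_Z_def by blast
  have "a * g i + b * h i = (\<Sum>x\<in>G. (a * c x + b * c' x) * x i)" for i
    unfolding g h by (simp add: sum_distrib_left sum.distrib distrib_right mult.assoc)
  then show ?thesis by (intro span_Z_intro ext)
qed

lemma span_Z_mono:
  assumes "A \<subseteq> B" "finite B"
  shows "span_Z A \<subseteq> span_Z B"
proof
  fix h assume "h \<in> span_Z A"
  then obtain c where c: "h = (\<lambda>i. \<Sum>x\<in>A. c x * x i)" unfolding span_Z_def by blast
  have "(\<Sum>x\<in>A. c x * x i) = (\<Sum>x\<in>B. (if x \<in> A then c x else 0) * x i)" for i
    using assms by (intro sum.mono_neutral_cong_left) auto
  then have "h = (\<lambda>i. \<Sum>x\<in>B. (if x \<in> A then c x else 0) * x i)" unfolding c by simp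
  then show "h \<in> span_Z B" by (rule span_Z_intro)
qed

lemma lv_le_of_span_Z:
  assumes "\<forall>g\<in>G. lv d \<sigma> g \<le> k" "h \<in> span_Z G"
  shows "lv d \<sigma> h \<le> k"
proof -
  obtain c where h: "h = (\<lambda>i. \<Sum>g\<in>G. c g * g i)" using assms(2) unfolding span_Z_def by blast
  have "h (\<sigma> j) = 0" if "j \<in> {1..d}" "k < j" for j
  proof -
    have "g (\<sigma> j) = 0" if "g \<in> G" for g
      using assms(1) \<open>g \<in> G\<close> \<open>j \<in> {1..d}\<close> \<open>k < j\<close> unfolding lv_le_iff by blast
    then show ?thesis unfolding h by (intro sum.neutral) simp
  qed
  then show ?thesis unfolding lv_le_iff by blast
qed

lemma lin_indep_Z_zero_notin:
  assumes "lin_indep_Z G"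
  shows "(\<lambda>_. 0) \<notin> G"
proof
  assume "(\<lambda>_. 0) \<in> G"
  let ?c = "\<lambda>x. if x = (\<lambda>_. 0) then 1 else 0 :: int"
  have "\<forall>i. (\<Sum>g\<in>G. ?c g * g i) = 0" by (intro allI sum.neutral) auto
  then have "\<forall>g\<in>G. ?c g = 0"
    using spec[OF conjunct2[OF assms[unfolded lin_indep_Z_def]], of ?c] by blast
  then show False using \<open>(\<lambda>_. 0) \<in> G\<close> by force
qed

lemma lin_indep_Z_smult_notin_span:
  assumes "lin_indep_Z G" "g \<in> G" "a \<noteq> 0"
  shows "smult_lp a g \<notin> span_Z (G - {g})"
proof
  assume "smult_lp a g \<in> span_Z (G - {g})"
  then obtain c where "smult_lp a g = (\<lambda>i. \<Sum>x\<in>G - {g}. c x * x i)"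
    unfolding span_Z_def by blast
  then have c: "a * g i = (\<Sum>x\<in>G - {g}. c x * x i)" for i
    by (metis smult_lp_def)
  define c' where "c' x = (if x = g then - a else c x)" for x
  have fin: "finite G" using assms(1) unfolding lin_indep_Z_def by blast
  have "(\<Sum>x\<in>G - {g}. c' x * x i) = (\<Sum>x\<in>G - {g}. c x * x i)" for i
    by (intro sum.cong) (auto simp: c'_def)
  moreover have "(\<Sum>x\<in>G. c' x * x i) = c' g * g i + (\<Sum>x\<in>G - {g}. c' x * x i)" for i
    using fin assms(2) by (rule sum.remove)
  ultimately have "(\<Sum>x\<in>G. c' x * x i) = 0" for i
    using c[of i] by (simp add: c'_def)
  then have "c' g = 0" using assms(1,2) unfolding lin_indep_Z_def by blast
  then show False using assms(3) by (simp add: c'_def)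
qed

section \<open>The elimination property for a single left-hand side\<close>

definition rhs_upto :: "nat \<Rightarrow> (nat \<Rightarrow> nat) \<Rightarrow> dsystem \<Rightarrow> lpoly \<Rightarrow> nat \<Rightarrow> lpoly set" where
  "rhs_upto d \<sigma> \<Phi> f k = {g. lv d \<sigma> g \<le> k \<and> (f, g) \<in> set \<Phi>}"

definition elimination_at :: "nat \<Rightarrow> (nat \<Rightarrow> nat) \<Rightarrow> dsystem \<Rightarrow> lpoly \<Rightarrow> bool" where
  "elimination_at d \<sigma> \<Phi> f \<longleftrightarrow> (\<forall>k\<le>d. lin_indep_Z (rhs_upto d \<sigma> \<Phi> f k) \<and>
      span_Z (rhs_upto d \<sigma> \<Phi> f k) = Mmod \<Phi> f \<inter> lower_polys d \<sigma> k)"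

lemma elimination_property_imp_at:
  "elimination_property d \<sigma> \<Phi> \<Longrightarrow> f \<in> prim_part ` lhs \<Phi> \<Longrightarrow> elimination_at d \<sigma> \<Phi> f"
  unfolding elimination_property_def elimination_at_def rhs_upto_def Let_def by blast

lemma finite_rhs_upto: "finite (rhs_upto d \<sigma> \<Phi> f k)"
proof -
  have "rhs_upto d \<sigma> \<Phi> f k \<subseteq> snd ` set \<Phi>" unfolding rhs_upto_def by force
  then show ?thesis by (rule finite_subset) simp
qed

lemma elimination_at_rhs_nonzero:
  assumes "elimination_at d \<sigma> \<Phi> f" "(f, g) \<in> set \<Phi>"
  shows "g \<noteq> (\<lambda>_. 0)"
proof -
  have "lin_indep_Z (rhs_upto d \<sigma> \<Phi> f d)" using assms(1) unfolding elimination_at_def by blast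
  moreover have "g \<in> rhs_upto d \<sigma> \<Phi> f d" using assms(2) lv_le unfolding rhs_upto_def by blast
  ultimately show ?thesis using lin_indep_Z_zero_notin by blast
qed

text \<open>Otherwise the S-polynomial of the two right-hand sides lies in the span of the lower
  right-hand sides, a non-trivial linear relation among them.\<close>

lemma elimination_at_rhs_unique:
  assumes sys: "is_system d \<Phi>" and vo: "var_order d \<sigma>" and el: "elimination_at d \<sigma> \<Phi> f"
    and g: "(f, g) \<in> set \<Phi>" and g': "(f, g') \<in> set \<Phi>" and same_lv: "lv d \<sigma> g = lv d \<sigma> g'"
  shows "g = g'"
proof (rule ccontr)
  assume "g \<noteq> g'"
  define k where "k = lv d \<sigma> g"
  define G where "G = rhs_upto d \<sigma> \<Phi> f k"
  have "k \<le> d" unfolding k_def by (rule lv_le)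
  then have indep: "lin_indep_Z G" using el unfolding elimination_at_def G_def by blast
  have finG: "finite (G - {g})" unfolding G_def using finite_rhs_upto by blast
  have g'G: "g' \<in> G - {g}" using g' same_lv \<open>g \<noteq> g'\<close> unfolding G_def rhs_upto_def k_def by auto
  have iv: "in_vars d g" "in_vars d g'" using sys g g' unfolding is_system_def by auto
  let ?s = "spoly d \<sigma> g g'"
  have "?s \<in> span_Z (G - {g})"
  proof (cases "k = 0")
    case True
    then show ?thesis
      using spoly_same_lv_zero[OF vo iv] same_lv span_Z_zero unfolding k_def by simp
  next
    case False
    have "?s \<in> Mmod \<Phi> f"
      using Mmod_lin[OF Mmod_rhs[OF g] Mmod_rhs[OF g'], of "lc d \<sigma> g'" "- lc d \<sigma> g"]
      by (simp add: spoly_def)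
    moreover have "lv d \<sigma> ?s \<le> k - 1"
      using lv_spoly_less[OF same_lv] False same_lv unfolding k_def by simp
    ultimately have "?s \<in> span_Z (rhs_upto d \<sigma> \<Phi> f (k - 1))"
      using el \<open>k \<le> d\<close> in_vars_spoly[OF iv] unfolding elimination_at_def lower_polys_def by auto
    moreover have "rhs_upto d \<sigma> \<Phi> f (k - 1) \<subseteq> G - {g}"
      using False unfolding G_def rhs_upto_def k_def by auto
    ultimately show ?thesis using span_Z_mono[OF _ finG] by blast
  qed
  then have "(\<lambda>i. 1 * ?s i + lc d \<sigma> g * g' i) \<in> span_Z (G - {g})"
    using span_Z_lin span_Z_base[OF finG g'G] by blast
  moreover have "(\<lambda>i. 1 * ?s i + lc d \<sigma> g * g' i) = smult_lp (lc d \<sigma> g') g"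
    by (simp add: spoly_def smult_lp_def)
  moreover have "g \<in> G" using g unfolding G_def rhs_upto_def k_def by simp
  moreover have "lc d \<sigma> g' \<noteq> 0"
    using lc_nonzero[OF vo iv(2) elimination_at_rhs_nonzero[OF el g']] .
  ultimately show False using lin_indep_Z_smult_notin_span[OF indep] by metis
qed

lemma elimination_at_rhs_exists:
  assumes vo: "var_order d \<sigma>" and el: "elimination_at d \<sigma> \<Phi> f"
    and h: "h \<in> Mmod \<Phi> f" "in_vars d h" "h \<noteq> (\<lambda>_. 0)"
  shows "\<exists>g. (f, g) \<in> set \<Phi> \<and> lv d \<sigma> g = lv d \<sigma> h"
proof (rule ccontr)
  assume none: "\<not> ?thesis"
  define k where "k = lv d \<sigma> h"
  have "h \<in> span_Z (rhs_upto d \<sigma> \<Phi> f k)"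
    using el h lv_le[of d \<sigma> h] unfolding elimination_at_def lower_polys_def k_def by auto
  show False
  proof (cases "k = 0")
    case True
    then have "rhs_upto d \<sigma> \<Phi> f k = {}" using none unfolding rhs_upto_def k_def by auto
    then show False using \<open>h \<in> span_Z _\<close> h(3) span_Z_empty by simp
  next
    case False
    have "\<forall>g\<in>rhs_upto d \<sigma> \<Phi> f k. lv d \<sigma> g \<le> k - 1"
      using none unfolding rhs_upto_def k_def by fastforce
    then have "lv d \<sigma> h \<le> k - 1" using lv_le_of_span_Z \<open>h \<in> span_Z _\<close> by blast
    then show False using False unfolding k_def by simp
  qed
qed

section \<open>The sets \<open>\<Delta>\<^sub>f\<close>\<close>

lemma is_systemD:
  assumes "is_system d \<Phi>" "(f, g) \<in> set \<Phi>"
  shows "f \<noteq> (\<lambda>_. 0)" "in_vars d f" "in_vars d g"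
  using assms unfolding is_system_def by auto

lemma in_vars_terms: "is_system d \<Phi> \<Longrightarrow> h \<in> terms \<Phi> \<Longrightarrow> in_vars d h"
  unfolding terms_def is_system_def by auto

lemma finite_terms: "finite (terms \<Phi>)"
  unfolding terms_def by simp

lemma card_terms_le: "card (terms \<Phi>) \<le> 2 * length \<Phi>"
proof -
  have "card (terms \<Phi>) \<le> card (fst ` set \<Phi>) + card (snd ` set \<Phi>)"
    unfolding terms_def by (rule card_Un_le)
  also have "\<dots> \<le> length \<Phi> + length \<Phi>"
    by (intro add_mono) (metis card_image_le card_length finite_set le_trans)+
  finally show ?thesis by simp
qed

lemma card_lhs_le: "card (lhs \<Phi>) \<le> length \<Phi>"
  unfolding lhs_def by (metis card_image_le card_length finite_set le_trans)

lemma rhs_in_terms: "(f, g) \<in> set \<Phi> \<Longrightarrow> g \<in> terms \<Phi>"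
  unfolding terms_def by force

lemma Delta_in_vars:
  assumes "is_system d \<Phi>" "x \<in> Delta d \<sigma> \<Phi> f"
  shows "in_vars d x"
  using assms(2)
  by (induction rule: Delta.induct) (use assms(1) in_vars_terms is_systemD in_vars_spoly in blast)+

lemma Delta_no_rhs: "(\<And>g. (f, g) \<notin> set \<Phi>) \<Longrightarrow> Delta d \<sigma> \<Phi> f = terms \<Phi>"
proof
  show "Delta d \<sigma> \<Phi> f \<subseteq> terms \<Phi>" if "\<And>g. (f, g) \<notin> set \<Phi>"
  proof
    fix x assume "x \<in> Delta d \<sigma> \<Phi> f"
    then show "x \<in> terms \<Phi>" by (induction rule: Delta.induct) (use that in auto)
  qed
qed (auto intro: Delta.base)

text \<open>Under the elimination property each polynomial has at most one right-hand side of \<open>f\<close>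
  to be reduced with, so \<open>\<Delta>\<^sub>f\<close> consists of the iterates of a single reduction map on the terms;
  since every reduction lowers the rank, at most \<open>d + 1\<close> iterations are relevant.\<close>

definition reduce :: "nat \<Rightarrow> (nat \<Rightarrow> nat) \<Rightarrow> dsystem \<Rightarrow> lpoly \<Rightarrow> lpoly \<Rightarrow> lpoly" where
  "reduce d \<sigma> \<Phi> f h = (if \<exists>g. (f, g) \<in> set \<Phi> \<and> lv d \<sigma> g = lv d \<sigma> h
     then spoly d \<sigma> (SOME g. (f, g) \<in> set \<Phi> \<and> lv d \<sigma> g = lv d \<sigma> h) h else h)"

lemma reduce_eq_spoly:
  assumes "is_system d \<Phi>" "var_order d \<sigma>" "elimination_at d \<sigma> \<Phi> f"
    and g: "(f, g) \<in> set \<Phi>" "lv d \<sigma> g = lv d \<sigma> h"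
  shows "reduce d \<sigma> \<Phi> f h = spoly d \<sigma> g h"
proof -
  have ex: "\<exists>g. (f, g) \<in> set \<Phi> \<and> lv d \<sigma> g = lv d \<sigma> h" using g by blast
  define g0 where "g0 = (SOME g. (f, g) \<in> set \<Phi> \<and> lv d \<sigma> g = lv d \<sigma> h)"
  have "(f, g0) \<in> set \<Phi>" "lv d \<sigma> g0 = lv d \<sigma> h" using someI_ex[OF ex] unfolding g0_def by auto
  then have "g0 = g" using elimination_at_rhs_unique[OF assms(1-3)] g by metis
  then show ?thesis using ex unfolding reduce_def g0_def by simp
qed

lemma Delta_reduce_iterate:
  assumes sys: "is_system d \<Phi>" and vo: "var_order d \<sigma>" and el: "elimination_at d \<sigma> \<Phi> f"
    and x: "x \<in> Delta d \<sigma> \<Phi> f"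
  shows "\<exists>t\<in>terms \<Phi>. \<exists>i. i + lv_rank d \<sigma> x \<le> lv_rank d \<sigma> t \<and> x = (reduce d \<sigma> \<Phi> f ^^ i) t"
  using x
proof (induction rule: Delta.induct)
  case (base h)
  then show ?case by (intro bexI[of _ h] exI[of _ 0]) auto
next
  case (step g h)
  then obtain t i where t: "t \<in> terms \<Phi>" "i + lv_rank d \<sigma> h \<le> lv_rank d \<sigma> t"
    "h = (reduce d \<sigma> \<Phi> f ^^ i) t" by blast
  show ?case
  proof (cases "h = (\<lambda>_. 0)")
    case True
    then show ?thesis
      using t by (intro bexI[of _ t] exI[of _ i]) (auto simp: spoly_zero_right lv_rank_def)
  next
    case False
    have "lv_rank d \<sigma> (spoly d \<sigma> g h) < lv_rank d \<sigma> h"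
      using lv_rank_spoly_less[OF vo is_systemD(3)[OF sys step(1)] Delta_in_vars[OF sys step(2)]]
        step(3) False by blast
    moreover have "spoly d \<sigma> g h = (reduce d \<sigma> \<Phi> f ^^ Suc i) t"
      using reduce_eq_spoly[OF sys vo el step(1,3)] t(3) by simp
    ultimately show ?thesis using t(1,2) by (intro bexI[of _ t] exI[of _ "Suc i"]) auto
  qed
qed

lemma card_Delta_le:
  assumes "is_system d \<Phi>" "var_order d \<sigma>" "elimination_at d \<sigma> \<Phi> f"
  shows "finite (Delta d \<sigma> \<Phi> f) \<and> card (Delta d \<sigma> \<Phi> f) \<le> 2 * length \<Phi> * (d + 2)"
proof -
  let ?I = "(\<lambda>(t, i). (reduce d \<sigma> \<Phi> f ^^ i) t) ` (terms \<Phi> \<times> {..Suc d})"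
  have sub: "Delta d \<sigma> \<Phi> f \<subseteq> ?I"
  proof
    fix x assume "x \<in> Delta d \<sigma> \<Phi> f"
    then obtain t i where "t \<in> terms \<Phi>" "i + lv_rank d \<sigma> x \<le> lv_rank d \<sigma> t"
      "x = (reduce d \<sigma> \<Phi> f ^^ i) t"
      using Delta_reduce_iterate[OF assms] by blast
    moreover have "i \<le> Suc d" using calculation(2) lv_rank_le[of d \<sigma> t] by linarith
    ultimately show "x \<in> ?I" by force
  qed
  have fin: "finite ?I" using finite_terms by simp
  have "card ?I \<le> card (terms \<Phi> \<times> {..Suc d})" by (rule card_image_le) (simp add: finite_terms)
  also have "\<dots> = card (terms \<Phi>) * (d + 2)" by (simp add: card_cartesian_product)
  also have "\<dots> \<le> 2 * length \<Phi> * (d + 2)" by (rule mult_le_mono1[OF card_terms_le])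
  finally show ?thesis using finite_subset[OF sub fin] card_mono[OF fin sub] by linarith
qed

text \<open>Each reduction multiplies the size of the coefficients by at most \<open>2N\<close>.\<close>

lemma Delta_coeff_bound_rank:
  fixes N :: int
  assumes sys: "is_system d \<Phi>" and vo: "var_order d \<sigma>"
    and N: "\<And>t i. t \<in> terms \<Phi> \<Longrightarrow> \<bar>t i\<bar> \<le> N" "1 \<le> N"
    and x: "x \<in> Delta d \<sigma> \<Phi> f"
  shows "\<bar>x i\<bar> \<le> (2 * N) ^ (Suc (Suc d) - lv_rank d \<sigma> x)"
  using x
proof (induction arbitrary: i rule: Delta.induct)
  case (base h)
  have "N \<le> (2 * N) ^ 1" using N(2) by simp
  also have "\<dots> \<le> (2 * N) ^ (Suc (Suc d) - lv_rank d \<sigma> h)"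
    using N(2) lv_rank_le[of d \<sigma> h] by (intro power_increasing) auto
  finally show ?case using N(1)[OF base] order_trans by blast
next
  case (step g h)
  show ?case
  proof (cases "h = (\<lambda>_. 0)")
    case True
    then show ?thesis using N(2) by (simp add: spoly_zero_right)
  next
    case False
    define e where "e = Suc (Suc d) - lv_rank d \<sigma> h"
    have "lv_rank d \<sigma> (spoly d \<sigma> g h) < lv_rank d \<sigma> h"
      using lv_rank_spoly_less[OF vo is_systemD(3)[OF sys step(1)] Delta_in_vars[OF sys step(2)]]
        step(3) False by blast
    then have e: "Suc e \<le> Suc (Suc d) - lv_rank d \<sigma> (spoly d \<sigma> g h)"
      using lv_rank_le[of d \<sigma> h] unfolding e_def by linarith
    have "\<bar>spoly d \<sigma> g h i\<bar> \<le> 2 * N * (2 * N) ^ e"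
      using abs_spoly_le[of g N h] N(1)[OF rhs_in_terms[OF step(1)]] step.IH unfolding e_def
      by (simp add: mult.assoc)
    also have "\<dots> = (2 * N) ^ Suc e" by simp
    also have "\<dots> \<le> (2 * N) ^ (Suc (Suc d) - lv_rank d \<sigma> (spoly d \<sigma> g h))"
      using N(2) e by (intro power_increasing) auto
    finally show ?thesis .
  qed
qed

lemma Delta_coeff_bound:
  fixes N :: int
  assumes "is_system d \<Phi>" "var_order d \<sigma>"
    and "\<And>t i. t \<in> terms \<Phi> \<Longrightarrow> \<bar>t i\<bar> \<le> N" "1 \<le> N"
    and "x \<in> Delta d \<sigma> \<Phi> f"
  shows "\<bar>x i\<bar> \<le> (2 * N) ^ (d + 2)"
proof -
  have "\<bar>x i\<bar> \<le> (2 * N) ^ (Suc (Suc d) - lv_rank d \<sigma> x)"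
    using assms by (rule Delta_coeff_bound_rank)
  also have "\<dots> \<le> (2 * N) ^ (d + 2)" using assms(4) by (intro power_increasing) auto
  finally show ?thesis .
qed

lemma Gcd_range_mult: "Gcd (range (\<lambda>i. k * q i)) = \<bar>k\<bar> * Gcd (range (q :: nat \<Rightarrow> int))"
proof -
  have "range (\<lambda>i. k * q i) = (*) k ` range q" by auto
  then show ?thesis by (simp add: Gcd_mult abs_mult)
qed

lemma pgcd_smult: "pgcd (smult_lp a f) = \<bar>a\<bar> * pgcd f"
  unfolding pgcd_def smult_lp_def by (rule Gcd_range_mult)

lemma primitive_imp_prim_part: "primitive f \<Longrightarrow> prim_part f = f"
  unfolding primitive_def prim_part_def by simp

lemma primitive_prim_part:
  assumes "h \<noteq> (\<lambda>_. 0)"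
  shows "primitive (prim_part h)"
proof -
  have pos: "pgcd h \<noteq> 0" using assms unfolding pgcd_def by (auto simp: Gcd_0_iff)
  have h: "h = smult_lp (pgcd h) (prim_part h)"
    unfolding smult_lp_def prim_part_def pgcd_def by (auto intro: Gcd_dvd)
  then have "pgcd h = pgcd h * pgcd (prim_part h)"
    by (metis pgcd_smult abs_of_nonneg Gcd_int_greater_eq_0 pgcd_def)
  then have "pgcd (prim_part h) = 1" using pos by simp
  moreover have "prim_part h \<noteq> (\<lambda>_. 0)" using h assms by (auto simp: smult_lp_def)
  ultimately show ?thesis unfolding primitive_def by simp
qed

lemma primitive_smult_cancel:
  assumes f: "primitive f" and lam: "lam \<noteq> 0" and eq: "smult_lp lam g = smult_lp c f"
  shows "g = smult_lp (c div lam) f"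
proof -
  have "lam dvd c * f i" for i using fun_cong[OF eq, of i] by (metis dvd_triv_left smult_lp_def)
  then have "lam dvd pgcd (smult_lp c f)"
    unfolding pgcd_def smult_lp_def by (auto intro: Gcd_greatest)
  then have "lam dvd c" using f by (simp add: pgcd_smult primitive_def)
  then show ?thesis using eq lam by (auto simp: smult_lp_def fun_eq_iff dvd_def)
qed

lemma prim_part_smult_primitive:
  assumes "primitive f" "a \<noteq> 0"
  shows "prim_part (smult_lp a f) = smult_lp (sgn a) f"
proof -
  have "pgcd (smult_lp a f) = \<bar>a\<bar>" using assms by (simp add: pgcd_smult primitive_def)
  moreover have "a * y div \<bar>a\<bar> = sgn a * y" for y :: int
  proof (cases "0 < a")
    case False
    then have "a * y div \<bar>a\<bar> = (- a) * (- y) div (- a)" by simp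
    also have "\<dots> = - y" using assms(2) by (intro nonzero_mult_div_cancel_left) simp
    finally show ?thesis using False assms(2) by (simp add: sgn_if)
  qed (auto simp: sgn_if)
  ultimately show ?thesis by (simp add: prim_part_def smult_lp_def)
qed

lemma no_rhs_if_not_prim_lhs:
  "primitive f \<Longrightarrow> f \<notin> prim_part ` lhs \<Phi> \<Longrightarrow> (f, g) \<notin> set \<Phi>"
  using primitive_imp_prim_part unfolding lhs_def by force

text \<open>If neither \<open>f\<close> nor \<open>-f\<close> is the primitive part of a left-hand side, no divisibility
  constraint can fire inside \<open>M\<^sub>f\<close>, which is then just \<open>\<int> f\<close>.\<close>

lemma Mmod_eq_multiples:
  assumes sys: "is_system d \<Phi>" and f: "primitive f"
    and not_lhs: "f \<notin> prim_part ` lhs \<Phi>" "(\<lambda>i. - f i) \<notin> prim_part ` lhs \<Phi>"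
  shows "x \<in> Mmod \<Phi> f \<Longrightarrow> \<exists>c. x = smult_lp c f"
proof (induction rule: Mmod.induct)
  case gen
  show ?case by (intro exI[of _ 1]) (simp add: smult_lp_def)
next
  case (add g h)
  then obtain c1 c2 where "g = smult_lp c1 f" "h = smult_lp c2 f" by blast
  then show ?case by (intro exI[of _ "c1 + c2"]) (simp add: smult_lp_def algebra_simps)
next
  case (smul g b)
  then obtain c where "g = smult_lp c f" by blast
  then show ?case by (intro exI[of _ "b * c"]) (simp add: smult_lp_def mult.assoc)
next
  case (dvd g h b)
  then obtain c where c: "smult_lp b g = smult_lp c f" by blast
  show ?case
  proof (cases "b = 0")
    case True
    then show ?thesis by (intro exI[of _ 0]) (simp add: smult_lp_def)
  next
    case False
    define a where "a = c div b"
    have g: "g = smult_lp a f" unfolding a_def by (rule primitive_smult_cancel[OF f False c])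
    then have "a \<noteq> 0" using is_systemD(1)[OF sys dvd(1)] by (auto simp: smult_lp_def)
    then have "prim_part g = smult_lp (sgn a) f" using g prim_part_smult_primitive[OF f] by simp
    moreover have "prim_part g \<in> prim_part ` lhs \<Phi>" using dvd(1) unfolding lhs_def by force
    ultimately have False
      using not_lhs \<open>a \<noteq> 0\<close> by (cases "0 < a") (auto simp: smult_lp_def)
    then show ?thesis ..
  qed
qed

section \<open>Bounds on the multipliers \<open>\<lambda>\<close>\<close>

lemma min_lambda_le:
  assumes "smult_lp a g \<in> Mmod \<Phi> f" "a \<noteq> 0"
  shows "min_lambda \<Phi> f g \<le> nat \<bar>a\<bar>"
  unfolding min_lambda_def using assms by (intro Least_le) (cases "0 < a"; simp)

lemma min_lambda_attained:
  assumes "smult_lp a g \<in> Mmod \<Phi> f" "a \<noteq> 0"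
  obtains a' where "a' \<noteq> 0" "\<bar>a'\<bar> = int (min_lambda \<Phi> f g)" "smult_lp a' g \<in> Mmod \<Phi> f"
proof -
  let ?P = "\<lambda>n::nat. 0 < n \<and> (smult_lp (int n) g \<in> Mmod \<Phi> f \<or> smult_lp (- int n) g \<in> Mmod \<Phi> f)"
  have "?P (nat \<bar>a\<bar>)" using assms by (cases "0 < a") auto
  then have "?P (min_lambda \<Phi> f g)" unfolding min_lambda_def by (rule LeastI)
  then show ?thesis using that[of "int (min_lambda \<Phi> f g)"] that[of "- int (min_lambda \<Phi> f g)"]
    by auto
qed

lemma min_lambda_zero: "min_lambda \<Phi> f (\<lambda>_. 0) \<le> 1"
  using min_lambda_le[of 1 "\<lambda>_. 0" \<Phi> f] Mmod_zero by (simp add: smult_lp_def)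

lemma min_lambda_le_spoly:
  assumes gk: "(f, gk) \<in> set \<Phi>" "lc d \<sigma> gk \<noteq> 0"
    and lam: "lam \<noteq> 0" "smult_lp lam g \<in> Mmod \<Phi> f"
  shows "smult_lp lam (spoly d \<sigma> gk g) \<in> Mmod \<Phi> f"
    and "int (min_lambda \<Phi> f g) \<le> int (min_lambda \<Phi> f (spoly d \<sigma> gk g)) * \<bar>lc d \<sigma> gk\<bar>"
proof -
  let ?s = "spoly d \<sigma> gk g"
  have "smult_lp lam ?s = (\<lambda>i. (lam * lc d \<sigma> g) * gk i + (- lc d \<sigma> gk) * smult_lp lam g i)"
    unfolding spoly_def smult_lp_def by (auto simp: algebra_simps)
  then show sM: "smult_lp lam ?s \<in> Mmod \<Phi> f"
    using Mmod_lin[OF Mmod_rhs[OF gk(1)] lam(2), of "lam * lc d \<sigma> g" "- lc d \<sigma> gk"] by simp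
  obtain a where a: "a \<noteq> 0" "\<bar>a\<bar> = int (min_lambda \<Phi> f ?s)" "smult_lp a ?s \<in> Mmod \<Phi> f"
    using min_lambda_attained[OF sM lam(1)] by blast
  have "smult_lp (a * lc d \<sigma> gk) g = (\<lambda>i. (a * lc d \<sigma> g) * gk i + (- 1) * smult_lp a ?s i)"
    unfolding spoly_def smult_lp_def by (auto simp: algebra_simps)
  then have "smult_lp (a * lc d \<sigma> gk) g \<in> Mmod \<Phi> f"
    using Mmod_lin[OF Mmod_rhs[OF gk(1)] a(3), of "a * lc d \<sigma> g" "- 1"] by simp
  then have "int (min_lambda \<Phi> f g) \<le> \<bar>a * lc d \<sigma> gk\<bar>"
    using min_lambda_le a(1) gk(2) by fastforce
  then show "int (min_lambda \<Phi> f g) \<le> int (min_lambda \<Phi> f ?s) * \<bar>lc d \<sigma> gk\<bar>"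
    using a(2) by (simp add: abs_mult)
qed

text \<open>Induction on the rank: a multiple of \<open>g\<close> in \<open>M\<^sub>f\<close> can be traded, via the right-hand side
  \<open>g\<^sub>k\<close> with the same leading variable, for a multiple of \<open>S(g\<^sub>k, g) \<in> \<Delta>\<^sub>f\<close>, at the cost of the
  factor \<open>|lc g\<^sub>k| \<le> N\<close>.\<close>

lemma min_lambda_le_pow_rank:
  fixes N :: int
  assumes sys: "is_system d \<Phi>" and vo: "var_order d \<sigma>" and el: "elimination_at d \<sigma> \<Phi> f"
    and N: "\<And>t i. t \<in> terms \<Phi> \<Longrightarrow> \<bar>t i\<bar> \<le> N" "1 \<le> N"
  shows "g \<in> Delta d \<sigma> \<Phi> f \<Longrightarrow> lam \<noteq> 0 \<Longrightarrow> smult_lp lam g \<in> Mmod \<Phi> f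
         \<Longrightarrow> int (min_lambda \<Phi> f g) \<le> N ^ lv_rank d \<sigma> g"
proof (induction "lv_rank d \<sigma> g" arbitrary: g rule: less_induct)
  case less
  note gD = less.prems(1) and lam = less.prems(2,3)
  show ?case
  proof (cases "g = (\<lambda>_. 0)")
    case True
    then show ?thesis using min_lambda_zero[of \<Phi> f] by (simp add: lv_rank_def)
  next
    case False
    have iv: "in_vars d g" using Delta_in_vars[OF sys gD] .
    obtain gk where gk: "(f, gk) \<in> set \<Phi>" "lv d \<sigma> gk = lv d \<sigma> g"
      using elimination_at_rhs_exists[OF vo el lam(2) in_vars_smult[OF iv]] False lam lv_smult
      by (auto simp: smult_lp_def fun_eq_iff)
    have ivk: "in_vars d gk" using is_systemD(3)[OF sys gk(1)] .
    have lck: "lc d \<sigma> gk \<noteq> 0"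
      using lc_nonzero[OF vo ivk elimination_at_rhs_nonzero[OF el gk(1)]] .
    let ?s = "spoly d \<sigma> gk g"
    have rk: "lv_rank d \<sigma> ?s < lv_rank d \<sigma> g" by (rule lv_rank_spoly_less[OF vo ivk iv gk(2) False])
    have IH: "int (min_lambda \<Phi> f ?s) \<le> N ^ lv_rank d \<sigma> ?s"
      using less.hyps[OF rk Delta.step[OF gk(1) gD gk(2)] lam(1)]
        min_lambda_le_spoly(1)[OF gk(1) lck lam]
      by blast
    have "int (min_lambda \<Phi> f g) \<le> int (min_lambda \<Phi> f ?s) * \<bar>lc d \<sigma> gk\<bar>"
      by (rule min_lambda_le_spoly(2)[OF gk(1) lck lam])
    also have "\<dots> \<le> N ^ lv_rank d \<sigma> ?s * N"
      using IH abs_lc_le[of gk N d \<sigma>] N(1)[OF rhs_in_terms[OF gk(1)]] by (intro mult_mono) auto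
    also have "\<dots> = N ^ Suc (lv_rank d \<sigma> ?s)" by simp
    also have "\<dots> \<le> N ^ lv_rank d \<sigma> g" using N(2) rk by (intro power_increasing) auto
    finally show ?thesis .
  qed
qed

lemma min_lambda_le_pow:
  fixes N :: int
  assumes sys: "is_system d \<Phi>" and vo: "var_order d \<sigma>" and elim: "elimination_property d \<sigma> \<Phi>"
    and N: "\<And>t i. t \<in> terms \<Phi> \<Longrightarrow> \<bar>t i\<bar> \<le> N" "1 \<le> N"
    and f: "primitive f" and g: "g \<in> Delta d \<sigma> \<Phi> f"
    and lam: "lam \<noteq> 0" "smult_lp lam g \<in> Mmod \<Phi> f"
  shows "int (min_lambda \<Phi> f g) \<le> N ^ (d + 1)"
proof -
  have rank: "N ^ lv_rank d \<sigma> g \<le> N ^ (d + 1)"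
    using N(2) lv_rank_le[of d \<sigma> g] by (intro power_increasing) auto
  consider "f \<in> prim_part ` lhs \<Phi>"
    | "f \<notin> prim_part ` lhs \<Phi>" "(\<lambda>i. - f i) \<in> prim_part ` lhs \<Phi>"
    | "f \<notin> prim_part ` lhs \<Phi>" "(\<lambda>i. - f i) \<notin> prim_part ` lhs \<Phi>"
    by blast
  then show ?thesis
  proof cases
    case 1
    have "int (min_lambda \<Phi> f g) \<le> N ^ lv_rank d \<sigma> g"
      using N g lam
      by (rule min_lambda_le_pow_rank[OF sys vo elimination_property_imp_at[OF elim 1]])
    then show ?thesis using rank by linarith
  next
    case 2
    \<comment> \<open>\<open>f\<close> has no right-hand side, so \<open>\<Delta>\<^sub>f\<close> consists of the terms, which lie in \<open>\<Delta>\<^sub>-\<^sub>f\<close>\<close>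
    have "g \<in> Delta d \<sigma> \<Phi> (\<lambda>i. - f i)"
      using g Delta_no_rhs[OF no_rhs_if_not_prim_lhs[OF f 2(1)]] by (auto intro: Delta.base)
    moreover have "smult_lp lam g \<in> Mmod \<Phi> (\<lambda>i. - f i)" using lam(2) by (simp add: Mmod_uminus)
    ultimately have "int (min_lambda \<Phi> (\<lambda>i. - f i) g) \<le> N ^ lv_rank d \<sigma> g"
      using N lam(1)
      by (intro min_lambda_le_pow_rank[OF sys vo elimination_property_imp_at[OF elim 2(2)]])
    moreover have "min_lambda \<Phi> (\<lambda>i. - f i) g = min_lambda \<Phi> f g"
      unfolding min_lambda_def Mmod_uminus ..
    ultimately show ?thesis using rank by linarith
  next
    case 3
    obtain c where "smult_lp lam g = smult_lp c f"
      using Mmod_eq_multiples[OF sys f 3 lam(2)] by blast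
    then have "g = smult_lp (c div lam) f" by (rule primitive_smult_cancel[OF f lam(1)])
    then have "smult_lp 1 g \<in> Mmod \<Phi> f" using Mmod.smul[OF Mmod.gen] by (simp add: smult_lp_def)
    then have "min_lambda \<Phi> f g \<le> 1" using min_lambda_le[of 1 g] by simp
    moreover have "1 \<le> N ^ (d + 1)" using N(2) by (rule one_le_power)
    ultimately show ?thesis by linarith
  qed
qed

lemma DeltaAll_subset:
  assumes "is_system d \<Phi>"
  shows "DeltaAll d \<sigma> \<Phi> \<subseteq> (\<Union>f\<in>prim_part ` lhs \<Phi>. Delta d \<sigma> \<Phi> f)"
proof
  fix x assume "x \<in> DeltaAll d \<sigma> \<Phi>"
  then obtain h where h: "h \<noteq> (\<lambda>_. 0)" "x \<in> Delta d \<sigma> \<Phi> (prim_part h)"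
    unfolding DeltaAll_def by blast
  show "x \<in> (\<Union>f\<in>prim_part ` lhs \<Phi>. Delta d \<sigma> \<Phi> f)"
  proof (cases "prim_part h \<in> prim_part ` lhs \<Phi>")
    case False
    have "\<Phi> \<noteq> []" using assms unfolding is_system_def by auto
    then have "prim_part (fst (hd \<Phi>)) \<in> prim_part ` lhs \<Phi>" unfolding lhs_def by simp
    moreover have "Delta d \<sigma> \<Phi> (prim_part h) = terms \<Phi>"
      by (rule Delta_no_rhs[OF no_rhs_if_not_prim_lhs[OF primitive_prim_part[OF h(1)] False]])
    then have "x \<in> Delta d \<sigma> \<Phi> (prim_part (fst (hd \<Phi>)))" using h(2) by (auto intro: Delta.base)
    ultimately show ?thesis by blast
  next
    case True
    then show ?thesis using h(2) by blast
  qed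
qed

lemma in_vars_DeltaAll: "is_system d \<Phi> \<Longrightarrow> x \<in> DeltaAll d \<sigma> \<Phi> \<Longrightarrow> in_vars d x"
  unfolding DeltaAll_def using Delta_in_vars by blast

lemma DeltaAll_coeff_bound:
  fixes N :: int
  assumes "is_system d \<Phi>" "var_order d \<sigma>"
    and "\<And>t i. t \<in> terms \<Phi> \<Longrightarrow> \<bar>t i\<bar> \<le> N" "1 \<le> N"
    and "x \<in> DeltaAll d \<sigma> \<Phi>"
  shows "\<bar>x i\<bar> \<le> (2 * N) ^ (d + 2)"
proof -
  obtain f where "x \<in> Delta d \<sigma> \<Phi> f" using assms(5) unfolding DeltaAll_def by blast
  with assms(1-4) show ?thesis by (rule Delta_coeff_bound)
qed

lemma card_DeltaAll_le:
  assumes "is_system d \<Phi>" "var_order d \<sigma>" "elimination_property d \<sigma> \<Phi>"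
  shows "finite (DeltaAll d \<sigma> \<Phi>) \<and> card (DeltaAll d \<sigma> \<Phi>) \<le> 2 * length \<Phi> ^ 2 * (d + 2)"
proof -
  let ?F = "prim_part ` lhs \<Phi>"
  have finF: "finite ?F" unfolding lhs_def by simp
  have Delta: "finite (Delta d \<sigma> \<Phi> f) \<and> card (Delta d \<sigma> \<Phi> f) \<le> 2 * length \<Phi> * (d + 2)"
    if "f \<in> ?F" for f
    using card_Delta_le[OF assms(1,2) elimination_property_imp_at[OF assms(3) that]] .
  have "card (\<Union>f\<in>?F. Delta d \<sigma> \<Phi> f) \<le> (\<Sum>f\<in>?F. card (Delta d \<sigma> \<Phi> f))"
    by (rule card_UN_le[OF finF])
  also have "\<dots> \<le> card ?F * (2 * length \<Phi> * (d + 2))"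
    using sum_bounded_above[of ?F "\<lambda>f. card (Delta d \<sigma> \<Phi> f)"] Delta by simp
  also have "\<dots> \<le> length \<Phi> * (2 * length \<Phi> * (d + 2))"
    using card_image_le[of "lhs \<Phi>" prim_part] card_lhs_le[of \<Phi>] finF
    by (intro mult_le_mono1) (auto simp: lhs_def)
  finally have "card (\<Union>f\<in>?F. Delta d \<sigma> \<Phi> f) \<le> 2 * length \<Phi> ^ 2 * (d + 2)"
    by (simp add: power2_eq_square algebra_simps)
  moreover have "finite (\<Union>f\<in>?F. Delta d \<sigma> \<Phi> f)" using finF Delta by blast
  ultimately show ?thesis
    using DeltaAll_subset[OF assms(1)] card_mono[of _ "DeltaAll d \<sigma> \<Phi>"] finite_subset by fastforce
qed

lemma SX_cases:
  "h \<in> SX d \<sigma> X \<Longrightarrow> (h \<in> X \<Longrightarrow> P) \<Longrightarrow> (\<And>f g. f \<in> X \<Longrightarrow> g \<in> X \<Longrightarrow> h = spoly d \<sigma> f g \<Longrightarrow> P) \<Longrightarrow> P"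
  unfolding SX_def by blast

lemma card_SX_le:
  assumes "finite X"
  shows "finite (SX d \<sigma> X) \<and> card (SX d \<sigma> X) \<le> card X + card X * card X"
proof -
  have SX: "SX d \<sigma> X = X \<union> (\<lambda>(f, g). spoly d \<sigma> f g) ` (X \<times> X)" unfolding SX_def by auto
  have "card (SX d \<sigma> X) \<le> card X + card ((\<lambda>(f, g). spoly d \<sigma> f g) ` (X \<times> X))"
    unfolding SX by (rule card_Un_le)
  also have "card ((\<lambda>(f, g). spoly d \<sigma> f g) ` (X \<times> X)) \<le> card X * card X"
    using card_image_le[of "X \<times> X"] assms by (simp add: card_cartesian_product)
  finally show ?thesis using assms SX by simp
qed

lemma SX_coeff_bound:
  fixes C :: int
  assumes "\<And>x i. x \<in> X \<Longrightarrow> \<bar>x i\<bar> \<le> C" "h \<in> SX d \<sigma> X"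
  shows "\<bar>h i\<bar> \<le> 2 * C * C"
  using assms(2)
proof (rule SX_cases)
  assume "h \<in> X"
  moreover have "C \<le> 2 * C * C" by (cases "C \<le> 0") (simp_all add: mult_le_cancel_right1)
  ultimately show ?thesis using assms(1) order_trans by blast
next
  fix f g assume "f \<in> X" "g \<in> X" "h = spoly d \<sigma> f g"
  then show ?thesis using abs_spoly_le[of f C g C] assms(1) by blast
qed

lemma in_vars_SX: "(\<And>x. x \<in> X \<Longrightarrow> in_vars d x) \<Longrightarrow> h \<in> SX d \<sigma> X \<Longrightarrow> in_vars d h"
  by (erule SX_cases) (auto intro: in_vars_spoly)

section \<open>Counting primes\<close>

lemma prod_primes_dvd:
  fixes P :: "nat set"
  assumes "finite P" "\<And>p. p \<in> P \<Longrightarrow> prime p \<and> p dvd n"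
  shows "(\<Prod>P) dvd n"
  using assms
proof (induction P rule: finite_induct)
  case (insert p P)
  have "coprime p (\<Prod>P)"
    using insert by (auto intro!: prod_coprime_right) (metis primes_coprime)
  then show ?case using insert by (simp add: divides_mult)
qed simp

text \<open>\<open>\<Prod>P\<close> divides the product of the elements of \<open>S\<close>.\<close>

lemma log_prod_primes_le:
  fixes P :: "nat set" and S :: "int set"
  assumes S: "finite S" "0 \<notin> S" "\<And>a. a \<in> S \<Longrightarrow> \<bar>a\<bar> \<le> 2 ^ E" "card S \<le> n"
    and P: "\<And>p. p \<in> P \<Longrightarrow> prime p \<and> (\<exists>a\<in>S. int p dvd a)"
  shows "finite P \<and> log 2 (\<Prod>p\<in>P. real p) \<le> real (n * E)"
proof -
  define M where "M = (\<Prod>a\<in>S. nat \<bar>a\<bar>)"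
  have M: "0 < M" using S(1,2) unfolding M_def by (auto intro: prod_pos)
  have PM: "prime p \<and> p dvd M" if p: "p \<in> P" for p
  proof -
    obtain a where "a \<in> S" "int p dvd a" "prime p" using P[OF p] by blast
    then have "p dvd nat \<bar>a\<bar>" by (metis dvd_abs_iff int_dvd_int_iff zabs_def nat_0_le abs_ge_zero)
    then show ?thesis using \<open>a \<in> S\<close> \<open>prime p\<close> S(1) unfolding M_def by (meson dvd_prodI dvd_trans)
  qed
  have finP: "finite P" using PM M by (intro finite_subset[of P "{..M}"]) (auto intro: dvd_imp_le)
  have "(\<Prod>P) \<le> M" using prod_primes_dvd[OF finP PM] M by (rule dvd_imp_le)
  also have "M \<le> (2 ^ E) ^ n"
    unfolding M_def using S(3,4) by (intro prod_le_power) (auto simp: nat_le_iff)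
  finally have "(\<Prod>P) \<le> 2 ^ (n * E)" by (simp add: power_mult mult.commute)
  moreover have "0 < (\<Prod>P)" using finP PM by (simp add: prod_pos prime_gt_0_nat)
  ultimately have "log 2 (real (\<Prod>P)) \<le> real (n * E)" by (rule log2_of_power_le)
  then show ?thesis using finP by simp
qed

lemma norm_inf_ge:
  assumes "is_system d \<Phi>" "t \<in> terms \<Phi>"
  shows "\<bar>t i\<bar> \<le> norm_inf d \<Phi>"
proof -
  have "{\<bar>h i\<bar> | h i. h \<in> terms \<Phi> \<and> i \<le> d} = (\<lambda>(h, i). \<bar>h i\<bar>) ` (terms \<Phi> \<times> {..d})"
    by auto
  then have fin: "finite {\<bar>h i\<bar> | h i. h \<in> terms \<Phi> \<and> i \<le> d}" using finite_terms by simp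
  have ge: "\<bar>t i\<bar> \<le> norm_inf d \<Phi>" if "i \<le> d" for i
    unfolding norm_inf_def by (rule Max_ge[OF fin]) (use assms(2) that in blast)
  show ?thesis
  proof (cases "i \<le> d")
    case False
    then have "t i = 0" using in_vars_terms[OF assms] unfolding in_vars_def by simp
    then show ?thesis using ge[of 0] by simp
  qed (rule ge)
qed

lemma one_le_norm_inf:
  assumes "is_system d \<Phi>"
  shows "1 \<le> norm_inf d \<Phi>"
proof -
  obtain f g where fg: "(f, g) \<in> set \<Phi>" using assms unfolding is_system_def by (cases \<Phi>) auto
  then obtain i where "f i \<noteq> 0" using is_systemD(1)[OF assms fg] by auto
  then have "1 \<le> \<bar>f i\<bar>" by linarith
  also have "\<dots> \<le> norm_inf d \<Phi>" using fg by (intro norm_inf_ge[OF assms]) (force simp: terms_def)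
  finally show ?thesis .
qed

lemma bitsize_pow2:
  fixes N :: int
  assumes "0 \<le> N"
  obtains b where "bitsize N = 1 + int b" "N + 1 \<le> 2 ^ b"
proof
  let ?b = "nat \<lceil>log 2 (real_of_int (N + 1))\<rceil>"
  have "0 \<le> log 2 (real_of_int (N + 1))" using assms by simp
  then have "int ?b = \<lceil>log 2 (real_of_int (N + 1))\<rceil>" by simp
  then show "bitsize N = 1 + int ?b" unfolding bitsize_def using assms by simp
  have "log 2 (real_of_int (N + 1)) \<le> real ?b" by (simp add: real_nat_ceiling_ge)
  then have "real_of_int (N + 1) \<le> 2 powr real ?b" using assms by (subst (asm) log_le_iff) auto
  then have "real_of_int (N + 1) \<le> real_of_int (2 ^ ?b)" by (simp add: powr_realpow)
  then show "N + 1 \<le> 2 ^ ?b" by (simp only: of_int_le_iff)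
qed

lemma norm_inf_bitsize:
  assumes "is_system d \<Phi>"
  obtains b where "bitsize (norm_inf d \<Phi>) = 1 + int b" "norm_inf d \<Phi> + 1 \<le> 2 ^ b" "1 \<le> b"
proof -
  have "0 \<le> norm_inf d \<Phi>" using one_le_norm_inf[OF assms] by simp
  then obtain b where b: "bitsize (norm_inf d \<Phi>) = 1 + int b" "norm_inf d \<Phi> + 1 \<le> 2 ^ b"
    by (rule bitsize_pow2)
  moreover have "1 \<le> b" using b(2) one_le_norm_inf[OF assms] by (cases b) auto
  ultimately show ?thesis using that by blast
qed

section \<open>The bound on \<open>\<P>(\<Phi>)\<close>\<close>

definition nonzero_coeffs :: "nat \<Rightarrow> lpoly set \<Rightarrow> int set" where
  "nonzero_coeffs d X = {h i | h i. h \<in> X \<and> i \<le> d \<and> h i \<noteq> 0}"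

lemma nonzero_coeffsI:
  assumes "in_vars d h" "h \<in> X" "h i \<noteq> 0"
  shows "h i \<in> nonzero_coeffs d X"
proof -
  have "i \<le> d" using assms(1,3) unfolding in_vars_def by (meson not_le)
  then show ?thesis using assms(2,3) unfolding nonzero_coeffs_def by blast
qed

lemma card_nonzero_coeffs_le:
  assumes "finite X"
  shows "finite (nonzero_coeffs d X) \<and> card (nonzero_coeffs d X) \<le> card X * (d + 1)"
proof -
  have sub: "nonzero_coeffs d X \<subseteq> (\<lambda>(h, i). h i) ` (X \<times> {..d})"
    unfolding nonzero_coeffs_def by auto
  have "card ((\<lambda>(h, i). h i) ` (X \<times> {..d})) \<le> card X * (d + 1)"
    using card_image_le[of "X \<times> {..d}"] assms by (simp add: card_cartesian_product)
  moreover have "finite ((\<lambda>(h, i). h i) ` (X \<times> {..d}))" using assms by simp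
  ultimately show ?thesis using card_mono[OF _ sub] finite_subset[OF sub] by (meson le_trans)
qed

definition primesP_witnesses :: "nat \<Rightarrow> dsystem \<Rightarrow> int set" where
  "primesP_witnesses d \<Phi> = int ` {1..length \<Phi>} \<union> nonzero_coeffs d (lhs \<Phi>)"

lemma primesP_dvd_witness:
  assumes "is_system d \<Phi>" "p \<in> primesP \<Phi>"
  shows "prime p \<and> (\<exists>a \<in> primesP_witnesses d \<Phi>. int p dvd a)"
proof -
  have "prime p" using assms(2) unfolding primesP_def by simp
  moreover have "\<exists>a \<in> primesP_witnesses d \<Phi>. int p dvd a"
  proof (cases "p \<le> length \<Phi>")
    case True
    then have "p \<in> {1..length \<Phi>}" using prime_ge_1_nat[OF \<open>prime p\<close>] by simp
    then have "int p \<in> int ` {1..length \<Phi>}" by (rule imageI)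
    then show ?thesis unfolding primesP_witnesses_def by (intro bexI[of _ "int p"]) auto
  next
    case False
    then obtain f i where "f \<in> lhs \<Phi>" "f i \<noteq> 0" "int p dvd f i"
      using assms(2) unfolding primesP_def by blast
    moreover have "f \<in> terms \<Phi>" using \<open>f \<in> lhs \<Phi>\<close> unfolding lhs_def terms_def by blast
    then have "in_vars d f" by (rule in_vars_terms[OF assms(1)])
    then have "f i \<in> nonzero_coeffs d (lhs \<Phi>)" using calculation by (intro nonzero_coeffsI)
    then show ?thesis using \<open>int p dvd f i\<close> unfolding primesP_witnesses_def by blast
  qed
  ultimately show ?thesis ..
qed

lemma card_primesP_witnesses_le:
  "finite (primesP_witnesses d \<Phi>) \<and> 0 \<notin> primesP_witnesses d \<Phi>
    \<and> card (primesP_witnesses d \<Phi>) \<le> length \<Phi> * (d + 2)"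
proof -
  have "finite (lhs \<Phi>)" by (simp add: lhs_def)
  then have "finite (nonzero_coeffs d (lhs \<Phi>))"
    and "card (nonzero_coeffs d (lhs \<Phi>)) \<le> card (lhs \<Phi>) * (d + 1)"
    using card_nonzero_coeffs_le by blast+
  moreover have "card (lhs \<Phi>) * (d + 1) \<le> length \<Phi> * (d + 1)"
    using card_lhs_le by (rule mult_le_mono1)
  moreover have "card (int ` {1..length \<Phi>}) \<le> length \<Phi>"
    using card_image_le[of "{1..length \<Phi>}" int] by simp
  ultimately show ?thesis
    using card_Un_le[of "int ` {1..length \<Phi>}" "nonzero_coeffs d (lhs \<Phi>)"]
    unfolding primesP_witnesses_def nonzero_coeffs_def by auto
qed

lemma abs_primesP_witness_le:
  assumes sys: "is_system d \<Phi>" and b: "norm_inf d \<Phi> + 1 \<le> 2 ^ b"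
    and a: "a \<in> primesP_witnesses d \<Phi>"
  shows "\<bar>a\<bar> \<le> 2 ^ (b + length \<Phi>)"
  using a unfolding primesP_witnesses_def
proof
  assume "a \<in> int ` {1..length \<Phi>}"
  then obtain k where "a = int k" "k \<le> length \<Phi>" by auto
  then have "\<bar>a\<bar> < 2 ^ length \<Phi>" using less_exp[of "length \<Phi>"]
    by (metis abs_of_nat le_less_trans of_nat_less_iff of_nat_numeral of_nat_power)
  also have "(2::int) ^ length \<Phi> \<le> 2 ^ (b + length \<Phi>)" by (simp add: power_increasing)
  finally show ?thesis by simp
next
  assume "a \<in> nonzero_coeffs d (lhs \<Phi>)"
  then obtain h i where "a = h i" "h \<in> terms \<Phi>"
    unfolding nonzero_coeffs_def lhs_def terms_def by blast
  then have "\<bar>a\<bar> \<le> norm_inf d \<Phi>" using norm_inf_ge[OF sys] by simp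
  also have "\<dots> \<le> 2 ^ b" using b by linarith
  also have "(2::int) ^ b \<le> 2 ^ (b + length \<Phi>)" by (simp add: power_increasing)
  finally show ?thesis .
qed

lemma primesP_size_bound:
  fixes m q b :: nat
  shows "m * q * (b + m) \<le> m ^ 2 * q * (b + 3)"
proof -
  have "m * b \<le> m * m * b" using le_square[of m] by (rule mult_le_mono1)
  then have "m * b + m * m \<le> m * m * b + 3 * (m * m)" by linarith
  then have "q * (m * b + m * m) \<le> q * (m * m * b + 3 * (m * m))" by (rule mult_le_mono2)
  then show ?thesis by (simp add: power2_eq_square algebra_simps)
qed

lemma log_prod_primesP_le:
  assumes sys: "is_system d \<Phi>"
  shows "finite (primesP \<Phi>) \<and> log 2 (\<Prod>p\<in>primesP \<Phi>. real p)
    \<le> real (length \<Phi>) ^ 2 * (real d + 2) * (real_of_int (bitsize (norm_inf d \<Phi>)) + 2)"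
proof -
  let ?m = "length \<Phi>"
  obtain b where b: "bitsize (norm_inf d \<Phi>) = 1 + int b" "norm_inf d \<Phi> + 1 \<le> 2 ^ b"
    using norm_inf_bitsize[OF sys] by blast
  have primes: "finite (primesP \<Phi>) \<and>
      log 2 (\<Prod>p\<in>primesP \<Phi>. real p) \<le> real (?m * (d + 2) * (b + ?m))"
    using card_primesP_witnesses_le abs_primesP_witness_le[OF sys b(2)] primesP_dvd_witness[OF sys]
    by (intro log_prod_primes_le[of "primesP_witnesses d \<Phi>"]) auto
  have "real (?m * (d + 2) * (b + ?m)) \<le> real (?m ^ 2 * (d + 2) * (b + 3))"
    by (rule of_nat_mono[OF primesP_size_bound])
  also have "\<dots> = real ?m ^ 2 * (real d + 2) * (real_of_int (bitsize (norm_inf d \<Phi>)) + 2)"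
    unfolding b(1) by (simp add: algebra_simps)
  finally show ?thesis using primes by linarith
qed

section \<open>The bound on \<open>\<P>\<^sub>0(\<Phi>)\<close>\<close>

definition lambda_values :: "nat \<Rightarrow> (nat \<Rightarrow> nat) \<Rightarrow> dsystem \<Rightarrow> int set" where
  "lambda_values d \<sigma> \<Phi> = {int (min_lambda \<Phi> f g) | f g. f \<in> terms \<Phi> \<and> primitive f \<and>
     g \<in> Delta d \<sigma> \<Phi> f \<and> (\<exists>lam. lam \<noteq> 0 \<and> smult_lp lam g \<in> Mmod \<Phi> f)}"

lemma Delta_subset_DeltaAll:
  "f \<in> terms \<Phi> \<Longrightarrow> primitive f \<Longrightarrow> Delta d \<sigma> \<Phi> f \<subseteq> DeltaAll d \<sigma> \<Phi>"
  unfolding DeltaAll_def using primitive_imp_prim_part[of f] by (force simp: primitive_def)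

lemma lambda_values_subset:
  "lambda_values d \<sigma> \<Phi> \<subseteq> (\<lambda>(f, g). int (min_lambda \<Phi> f g)) ` (terms \<Phi> \<times> DeltaAll d \<sigma> \<Phi>)"
  unfolding lambda_values_def using Delta_subset_DeltaAll by fastforce

lemma lambda_values_bound:
  fixes N :: int
  assumes "is_system d \<Phi>" "var_order d \<sigma>" "elimination_property d \<sigma> \<Phi>"
    and "\<And>t i. t \<in> terms \<Phi> \<Longrightarrow> \<bar>t i\<bar> \<le> N" "1 \<le> N"
    and "a \<in> lambda_values d \<sigma> \<Phi>"
  shows "0 < a \<and> a \<le> N ^ (d + 1)"
proof -
  obtain f g lam where fg: "a = int (min_lambda \<Phi> f g)" "primitive f" "g \<in> Delta d \<sigma> \<Phi> f"
    "lam \<noteq> 0" "smult_lp lam g \<in> Mmod \<Phi> f"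
    using assms(6) unfolding lambda_values_def by blast
  obtain a' where "a' \<noteq> 0" "\<bar>a'\<bar> = int (min_lambda \<Phi> f g)"
    using min_lambda_attained[OF fg(5,4)] by blast
  then have "0 < a" using fg(1) by simp
  moreover have "a \<le> N ^ (d + 1)"
    unfolding fg(1) using assms(4,5) fg(3-5) by (rule min_lambda_le_pow[OF assms(1-3) _ _ fg(2)])
  ultimately show ?thesis ..
qed

lemma card_lambda_values_le:
  assumes "is_system d \<Phi>" "var_order d \<sigma>" "elimination_property d \<sigma> \<Phi>"
  shows "finite (lambda_values d \<sigma> \<Phi>)
    \<and> card (lambda_values d \<sigma> \<Phi>) \<le> 2 * length \<Phi> * (2 * length \<Phi> ^ 2 * (d + 2))"
proof -
  have D: "finite (DeltaAll d \<sigma> \<Phi>)" "card (DeltaAll d \<sigma> \<Phi>) \<le> 2 * length \<Phi> ^ 2 * (d + 2)"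
    using card_DeltaAll_le[OF assms] by auto
  then have fin: "finite (terms \<Phi> \<times> DeltaAll d \<sigma> \<Phi>)" using finite_terms by simp
  have "card (lambda_values d \<sigma> \<Phi>)
      \<le> card ((\<lambda>(f, g). int (min_lambda \<Phi> f g)) ` (terms \<Phi> \<times> DeltaAll d \<sigma> \<Phi>))"
    by (rule card_mono[OF finite_imageI[OF fin] lambda_values_subset])
  also have "\<dots> \<le> card (terms \<Phi> \<times> DeltaAll d \<sigma> \<Phi>)" by (rule card_image_le[OF fin])
  also have "\<dots> \<le> 2 * length \<Phi> * (2 * length \<Phi> ^ 2 * (d + 2))"
    using card_terms_le D(2) unfolding card_cartesian_product by (rule mult_le_mono)
  finally show ?thesis using finite_subset[OF lambda_values_subset finite_imageI[OF fin]] by blast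
qed

lemma card_SX_DeltaAll_le:
  assumes "is_system d \<Phi>" "var_order d \<sigma>" "elimination_property d \<sigma> \<Phi>"
  shows "finite (SX d \<sigma> (DeltaAll d \<sigma> \<Phi>))
    \<and> card (SX d \<sigma> (DeltaAll d \<sigma> \<Phi>)) \<le> 6 * (length \<Phi> ^ 2 * (d + 2)) ^ 2"
proof -
  define K where "K = length \<Phi> ^ 2 * (d + 2)"
  have "1 \<le> length \<Phi> ^ 2" using assms(1) unfolding is_system_def by simp
  then have "1 * 1 \<le> K" unfolding K_def by (intro mult_le_mono) simp_all
  then have "1 \<le> K" by simp
  have D: "finite (DeltaAll d \<sigma> \<Phi>)" "card (DeltaAll d \<sigma> \<Phi>) \<le> 2 * K"
    using card_DeltaAll_le[OF assms] unfolding K_def by (simp_all add: mult.assoc)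
  have "card (SX d \<sigma> (DeltaAll d \<sigma> \<Phi>)) \<le> card (DeltaAll d \<sigma> \<Phi>) + card (DeltaAll d \<sigma> \<Phi>) ^ 2"
    using card_SX_le[OF D(1)] unfolding power2_eq_square by blast
  also have "\<dots> \<le> 2 * K + (2 * K) ^ 2" using D(2) by (intro add_mono power_mono) auto
  also have "\<dots> \<le> 6 * K ^ 2" using \<open>1 \<le> K\<close> by (simp add: power2_eq_square)
  finally show ?thesis using card_SX_le[OF D(1)] unfolding K_def by blast
qed

definition primesP0_witnesses :: "nat \<Rightarrow> (nat \<Rightarrow> nat) \<Rightarrow> dsystem \<Rightarrow> int set" where
  "primesP0_witnesses d \<sigma> \<Phi> = int ` {1..card (SX d \<sigma> (DeltaAll d \<sigma> \<Phi>))}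
     \<union> nonzero_coeffs d (SX d \<sigma> (DeltaAll d \<sigma> \<Phi>)) \<union> lambda_values d \<sigma> \<Phi>"

lemma primesP0_dvd_witness:
  assumes sys: "is_system d \<Phi>" and fin: "finite (SX d \<sigma> (DeltaAll d \<sigma> \<Phi>))"
    and p: "p \<in> primesP0 d \<sigma> \<Phi>"
  shows "prime p \<and> (\<exists>a \<in> primesP0_witnesses d \<sigma> \<Phi>. int p dvd a)"
proof -
  let ?X = "SX d \<sigma> (DeltaAll d \<sigma> \<Phi>)"
  have "prime p" using p unfolding primesP0_def by simp
  consider "p \<le> card ?X" | h i where "h \<in> ?X" "h i \<noteq> 0" "int p dvd h i"
    | a where "int p dvd a" "a \<in> lambda_values d \<sigma> \<Phi>"
    using p fin unfolding primesP0_def lambda_values_def by blast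
  then have "\<exists>a \<in> primesP0_witnesses d \<sigma> \<Phi>. int p dvd a"
  proof cases
    case 1
    then have "p \<in> {1..card ?X}" using prime_ge_1_nat[OF \<open>prime p\<close>] by simp
    then have "int p \<in> int ` {1..card ?X}" by (rule imageI)
    then show ?thesis unfolding primesP0_witnesses_def by (intro bexI[of _ "int p"]) auto
  next
    case (2 h i)
    have "in_vars d h" using in_vars_DeltaAll[OF sys] \<open>h \<in> ?X\<close> by (rule in_vars_SX)
    then have "h i \<in> nonzero_coeffs d ?X" using 2 by (intro nonzero_coeffsI)
    then show ?thesis using \<open>int p dvd h i\<close> unfolding primesP0_witnesses_def by blast
  next
    case (3 a)
    then show ?thesis unfolding primesP0_witnesses_def by blast
  qed
  with \<open>prime p\<close> show ?thesis ..
qed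

lemma primesP0_count_bound:
  fixes m d c l :: nat
  assumes "1 \<le> m" "c \<le> 6 * (m ^ 2 * (d + 2)) ^ 2" "l \<le> 2 * m * (2 * m ^ 2 * (d + 2))"
  shows "c + c * (d + 1) + l \<le> 10 * (m ^ 2 * (d + 2)) ^ 2 * (d + 2)"
proof -
  define q where "q = d + 2"
  define K where "K = m ^ 2 * q"
  have "1 \<le> m * q * q" using assms(1) unfolding q_def by simp
  then have "m * 1 \<le> m * (m * q * q)" by (rule mult_le_mono2)
  also have "\<dots> = K * q" unfolding K_def power2_eq_square by (simp only: mult_ac)
  finally have "m * K \<le> K * q * K" by (intro mult_le_mono1) simp
  have "l \<le> 4 * (m * K)"
    using assms(3)[folded q_def, unfolded mult.assoc[of 2 "m ^ 2"], folded K_def]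
    by (simp add: mult_ac)
  also have "\<dots> \<le> 4 * (K * q * K)" using \<open>m * K \<le> K * q * K\<close> by (rule mult_le_mono2)
  also have "\<dots> = 4 * (K ^ 2 * q)" by (simp only: power2_eq_square mult_ac)
  finally have l: "l \<le> 4 * (K ^ 2 * q)" .
  have c: "c * q \<le> 6 * K ^ 2 * q" using assms(2)[folded q_def, folded K_def] by (rule mult_le_mono1)
  have "c + c * (d + 1) + l = c * q + l" unfolding q_def by (simp add: algebra_simps)
  also have "\<dots> \<le> 6 * K ^ 2 * q + 4 * (K ^ 2 * q)" using c l by (rule add_mono)
  also have "\<dots> = 10 * K ^ 2 * q" by simp
  finally show ?thesis unfolding K_def q_def .
qed

lemma card_primesP0_witnesses_le:
  assumes "is_system d \<Phi>" "var_order d \<sigma>" "elimination_property d \<sigma> \<Phi>"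
  shows "finite (primesP0_witnesses d \<sigma> \<Phi>) \<and> 0 \<notin> primesP0_witnesses d \<sigma> \<Phi>
    \<and> card (primesP0_witnesses d \<sigma> \<Phi>) \<le> 10 * (length \<Phi> ^ 2 * (d + 2)) ^ 2 * (d + 2)"
proof -
  let ?X = "SX d \<sigma> (DeltaAll d \<sigma> \<Phi>)" and ?L = "lambda_values d \<sigma> \<Phi>"
  have X: "finite ?X" "card ?X \<le> 6 * (length \<Phi> ^ 2 * (d + 2)) ^ 2"
    using card_SX_DeltaAll_le[OF assms] by auto
  have L: "finite ?L" "card ?L \<le> 2 * length \<Phi> * (2 * length \<Phi> ^ 2 * (d + 2))"
    using card_lambda_values_le[OF assms] by auto
  have C: "finite (nonzero_coeffs d ?X)" "card (nonzero_coeffs d ?X) \<le> card ?X * (d + 1)"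
    using card_nonzero_coeffs_le[OF X(1)] by auto
  have "card (int ` {1..card ?X}) \<le> card ?X" using card_image_le[of "{1..card ?X}" int] by simp
  then have "card (primesP0_witnesses d \<sigma> \<Phi>) \<le> card ?X + card ?X * (d + 1) + card ?L"
    using card_Un_le[of "int ` {1..card ?X} \<union> nonzero_coeffs d ?X" ?L]
      card_Un_le[of "int ` {1..card ?X}" "nonzero_coeffs d ?X"] C(2)
    unfolding primesP0_witnesses_def by linarith
  also have "\<dots> \<le> 10 * (length \<Phi> ^ 2 * (d + 2)) ^ 2 * (d + 2)"
    using _ X(2) L(2) by (rule primesP0_count_bound) (use assms(1) in \<open>simp add: is_system_def\<close>)
  moreover have "0 < a" if "a \<in> ?L" for a
    using assms norm_inf_ge[OF assms(1)] one_le_norm_inf[OF assms(1)] that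
    by (rule lambda_values_bound[THEN conjunct1])
  then have "0 \<notin> primesP0_witnesses d \<sigma> \<Phi>"
    unfolding primesP0_witnesses_def nonzero_coeffs_def by fastforce
  ultimately show ?thesis using X(1) L(1) C(1) unfolding primesP0_witnesses_def by simp
qed

lemma primesP0_range_pow2:
  fixes m q b :: nat
  assumes "1 \<le> b" "2 \<le> q"
  shows "6 * (m ^ 2 * q) ^ 2 \<le> 2 ^ (2 * q * (b + 2 * m + 1))"
proof -
  have "m ^ 2 \<le> (2 ^ m) ^ 2" using less_exp[of m] by (intro power_mono) auto
  moreover have "q \<le> 2 ^ q" using less_exp[of q] by simp
  ultimately have "m ^ 2 * q \<le> (2 ^ m) ^ 2 * 2 ^ q" by (rule mult_le_mono)
  also have "\<dots> = 2 ^ (m * 2 + q)" by (simp only: power_add power_mult)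
  finally have "6 * (m ^ 2 * q) ^ 2 \<le> 2 ^ 3 * (2 ^ (m * 2 + q)) ^ 2"
    by (intro mult_le_mono power_mono) auto
  also have "\<dots> = 2 ^ (3 + (m * 2 + q) * 2)" by (simp only: power_add power_mult)
  also have "\<dots> \<le> 2 ^ (2 * q * (b + 2 * m + 1))"
  proof (rule power_increasing)
    have "2 \<le> b * q" "m \<le> m * q" using mult_le_mono[OF assms] assms(2) by simp_all
    have "3 + (m * 2 + q) * 2 = 3 + 4 * m + 2 * q" by simp
    also have "\<dots> \<le> 2 * (b * q) + 4 * (m * q) + 2 * q"
      using \<open>2 \<le> b * q\<close> \<open>m \<le> m * q\<close> by (intro add_mono) auto
    also have "\<dots> = 2 * q * (b + 2 * m + 1)" by (simp add: algebra_simps)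
    finally show "3 + (m * 2 + q) * 2 \<le> 2 * q * (b + 2 * m + 1)" .
  qed simp
  finally show ?thesis .
qed

lemma primesP0_coeff_pow2:
  fixes N :: int and m q b :: nat
  assumes "1 \<le> N" "N + 1 \<le> 2 ^ b" "1 \<le> m" "1 \<le> q"
  shows "2 * ((2 * N) ^ q) ^ 2 \<le> 2 ^ (2 * q * (b + 2 * m + 1))"
proof -
  have "2 * N \<le> 2 ^ Suc b" using assms(2) by simp
  then have "(2 * N) ^ q \<le> (2 ^ Suc b) ^ q" by (rule power_mono) (use assms(1) in simp)
  then have "((2 * N) ^ q) ^ 2 \<le> ((2 ^ Suc b) ^ q) ^ 2" by (rule power_mono) (use assms(1) in simp)
  then have "2 * ((2 * N) ^ q) ^ 2 \<le> 2 * ((2 ^ Suc b) ^ q) ^ 2" by simp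
  also have "\<dots> = 2 ^ (Suc (Suc b * q * 2))" by (simp only: power_Suc power_mult)
  also have "\<dots> \<le> 2 ^ (2 * q * (b + 2 * m + 1))"
  proof (rule power_increasing)
    have "1 \<le> m * q" using assms(3,4) by simp
    then show "Suc (Suc b * q * 2) \<le> 2 * q * (b + 2 * m + 1)" by (simp add: algebra_simps)
  qed simp
  finally show ?thesis .
qed

lemma abs_primesP0_witness_le:
  assumes sys: "is_system d \<Phi>" and vo: "var_order d \<sigma>" and elim: "elimination_property d \<sigma> \<Phi>"
    and b: "norm_inf d \<Phi> + 1 \<le> 2 ^ b" "1 \<le> b"
    and a: "a \<in> primesP0_witnesses d \<sigma> \<Phi>"
  shows "\<bar>a\<bar> \<le> 2 ^ (2 * (d + 2) * (b + 2 * length \<Phi> + 1))"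
proof -
  let ?E = "2 * (d + 2) * (b + 2 * length \<Phi> + 1)" and ?X = "SX d \<sigma> (DeltaAll d \<sigma> \<Phi>)"
  define N where "N = norm_inf d \<Phi>"
  define C where "C = (2 * N) ^ (d + 2)"
  have N: "\<And>t i. t \<in> terms \<Phi> \<Longrightarrow> \<bar>t i\<bar> \<le> N" "1 \<le> N"
    unfolding N_def using norm_inf_ge[OF sys] one_le_norm_inf[OF sys] by auto
  have m1: "1 \<le> length \<Phi>" using sys unfolding is_system_def by simp
  have C: "2 * C ^ 2 \<le> 2 ^ ?E"
    unfolding C_def by (rule primesP0_coeff_pow2[OF N(2) b(1)[folded N_def] m1]) simp
  have "1 \<le> C" unfolding C_def by (rule one_le_power) (use N(2) in simp)
  consider k where "a = int k" "k \<in> {1..card ?X}" | h i where "a = h i" "h \<in> ?X"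
    | "a \<in> lambda_values d \<sigma> \<Phi>"
    using a unfolding primesP0_witnesses_def nonzero_coeffs_def by blast
  then show ?thesis
  proof cases
    case (1 k)
    have "k \<le> 6 * (length \<Phi> ^ 2 * (d + 2)) ^ 2" using 1 card_SX_DeltaAll_le[OF sys vo elim] by auto
    also have "\<dots> \<le> 2 ^ ?E" by (rule primesP0_range_pow2[OF b(2)]) simp
    finally show ?thesis using 1 by (metis abs_of_nat of_nat_le_iff of_nat_numeral of_nat_power)
  next
    case (2 h i)
    have "\<bar>x j\<bar> \<le> C" if "x \<in> DeltaAll d \<sigma> \<Phi>" for x j
      using sys vo N that unfolding C_def by (rule DeltaAll_coeff_bound)
    then have "\<bar>h i\<bar> \<le> 2 * C * C" using 2(2) by (rule SX_coeff_bound)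
    then show ?thesis using C 2(1) by (simp add: power2_eq_square mult.assoc)
  next
    case 3
    have "0 < a \<and> a \<le> N ^ (d + 1)" using sys vo elim N 3 by (rule lambda_values_bound)
    then have "\<bar>a\<bar> \<le> N ^ (d + 1)" by simp
    also have "\<dots> \<le> (2 * N) ^ (d + 1)" using N(2) by (intro power_mono) auto
    also have "\<dots> \<le> C" unfolding C_def using N(2) by (intro power_increasing) auto
    also have "\<dots> \<le> 2 * C ^ 2" using \<open>1 \<le> C\<close> by (simp add: power2_eq_square)
    finally show ?thesis using C by linarith
  qed
qed

lemma primesP0_size_bound:
  fixes m q b :: nat
  assumes "1 \<le> m"
  shows "10 * (m ^ 2 * q) ^ 2 * q * (2 * q * (b + 2 * m + 1)) \<le> 64 * m ^ 5 * q ^ 4 * (b + 3)"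
proof -
  have "b \<le> m * b" using assms by simp
  moreover have "m * (b + 3) = m * b + 3 * m" by (simp add: algebra_simps)
  ultimately have "b + 2 * m + 1 \<le> m * (b + 3)" using assms by linarith
  have "10 * (m ^ 2 * q) ^ 2 * q * (2 * q * (b + 2 * m + 1))
      = 20 * (m ^ 4 * q ^ 4) * (b + 2 * m + 1)"
    by (simp add: power_mult_distrib power4_eq_xxxx power2_eq_square mult_ac)
  also have "\<dots> \<le> 20 * (m ^ 4 * q ^ 4) * (m * (b + 3))"
    using \<open>b + 2 * m + 1 \<le> m * (b + 3)\<close> by (rule mult_le_mono2)
  also have "\<dots> = 20 * m ^ 5 * q ^ 4 * (b + 3)"
    using power_add[of m 1 4] by (simp add: mult_ac)
  also have "\<dots> \<le> 64 * m ^ 5 * q ^ 4 * (b + 3)" by simp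
  finally show ?thesis .
qed

lemma log_prod_primesP0_le:
  assumes sys: "is_system d \<Phi>" and vo: "var_order d \<sigma>" and elim: "elimination_property d \<sigma> \<Phi>"
  shows "finite (primesP0 d \<sigma> \<Phi>) \<and> log 2 (\<Prod>p\<in>primesP0 d \<sigma> \<Phi>. real p)
    \<le> 64 * real (length \<Phi>) ^ 5 * (real d + 2) ^ 4 * (real_of_int (bitsize (norm_inf d \<Phi>)) + 2)"
proof -
  let ?m = "length \<Phi>"
  let ?n = "10 * (?m ^ 2 * (d + 2)) ^ 2 * (d + 2)"
  obtain b where b: "bitsize (norm_inf d \<Phi>) = 1 + int b" "norm_inf d \<Phi> + 1 \<le> 2 ^ b" "1 \<le> b"
    using norm_inf_bitsize[OF sys] by blast
  have "finite (SX d \<sigma> (DeltaAll d \<sigma> \<Phi>))" using card_SX_DeltaAll_le[OF sys vo elim] by blast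
  then have primes: "finite (primesP0 d \<sigma> \<Phi>) \<and> log 2 (\<Prod>p\<in>primesP0 d \<sigma> \<Phi>. real p)
      \<le> real (?n * (2 * (d + 2) * (b + 2 * ?m + 1)))"
    using card_primesP0_witnesses_le[OF sys vo elim] abs_primesP0_witness_le[OF sys vo elim b(2,3)]
      primesP0_dvd_witness[OF sys]
    by (intro log_prod_primes_le[of "primesP0_witnesses d \<sigma> \<Phi>"]) auto
  have "1 \<le> ?m" using sys unfolding is_system_def by simp
  then have "real (?n * (2 * (d + 2) * (b + 2 * ?m + 1)))
      \<le> real (64 * ?m ^ 5 * (d + 2) ^ 4 * (b + 3))"
    by (intro of_nat_mono primesP0_size_bound)
  also have "\<dots> = 64 * real ?m ^ 5 * (real d + 2) ^ 4 * (real_of_int (bitsize (norm_inf d \<Phi>)) + 2)"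
    unfolding b(1) by (simp add: algebra_simps)
  finally show ?thesis using primes by linarith
qed

theorem mainTheorem9:
  fixes d :: nat and \<Phi> :: dsystem
  assumes "is_system d \<Phi>"
  shows "(finite (primesP \<Phi>) \<and>
          log 2 (\<Prod>p\<in>primesP \<Phi>. real p)
            \<le> real (length \<Phi>) ^ 2 * (real d + 2) * (real_of_int (bitsize (norm_inf d \<Phi>)) + 2))
       \<and> (\<forall>\<sigma>. var_order d \<sigma> \<and> elimination_property d \<sigma> \<Phi> \<longrightarrow>
          finite (primesP0 d \<sigma> \<Phi>) \<and>
          log 2 (\<Prod>p\<in>primesP0 d \<sigma> \<Phi>. real p)
            \<le> 64 * real (length \<Phi>) ^ 5 * (real d + 2) ^ 4 * (real_of_int (bitsize (norm_inf d \<Phi>)) + 2))"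
  using log_prod_primesP_le[OF assms] log_prod_primesP0_le[OF assms] by blast

end
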